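(* Under the standing setting and assumptions (A0)–(A3) below, for every $n\in\mathbb N$, \[ \mathbb E[d^2(x_n,x^* )]\leq \mathbb E[d^2(x_0,x^* )]+\int\|\phi^*\|^2_{x^*}\,d\mu\cdot\sum_{k=0}^\infty\lambda_k^2<\infty. \]
   Context: Geometry. A Hadamard space is a complete CAT(0) space: a geodesic metric space $(X,d)$ with $d^2(\gamma(tl),x)\leq (1-t)d^2(\gamma(0),x)+td^2(\gamma(l),x)-t(1-t)d^2(\gamma(0),\gamma(l))$ for all $x\in X$, geodesics $\gamma:[0,l]\to X$, $t\in[0,1]$; it is uniquely geodesic, $\gamma_{x,y}$ denoting the geodesic from $x$ to $y$. For $x\in X$, $\angle_x(\gamma,\eta):=\lim_{s,t\to0^+}\bar\angle_x(\gamma(s),\eta(t))$ is the Aleksandrov angle between nonconstant geodesics issuing from $x$; $\Sigma_xX$ is the completion of such geodesics modulo $\angle_x=0$; the tangent space $T_xX$ is the Euclidean cone over $\Sigma_xX$ (elements $t\gamma$, $t\ge0$, all $0\gamma$ identified to $0_x$, $\lambda(t\gamma):=(\lambda t)\gamma$), with metric $d_x(t\gamma,s\eta)=\sqrt{t^2+s^2-2ts\cos\angle_x(\gamma,\eta)}$, $\|t\gamma\|_x=t$, $g_x(t\gamma,s\eta)=ts\cos\angle_x(\gamma,\eta)$; $TX=\bigcup_xT_xX$. $\log_x:X\to T_xX$, $\log_xa:=d(x,a)\gamma_{x,a}$ ($a\ne x$), $\log_xx:=0_x$. Vector fields. $A:X\to2^{TX}$ with $A(x)\subseteq T_xX$ is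 monotone if $g_x(u,\log_xy)\le-g_y(v,\log_yx)$ for all $u\in A(x),v\in A(y)$, and strongly monotone with modulus $\alpha>0$ if $g_x(u,\log_xy)\le-g_y(v,\log_yx)-\alpha d^2(x,y)$. For monotone $A$ and $\lambda>0$, the resolvent $J_\lambda x$ is the unique $z$ with $\tfrac1\lambda\log_zx\in A(z)$ (if it exists); $A$ satisfies the surjectivity condition if such $z$ exists for all $\lambda>0,x\in X$. The Yosida approximate is $A_\lambda x:=\tfrac1\lambda\log_{J_\lambda x}x\in T_{J_\lambda x}X$. Integration. For a probability space and a separable Hadamard space $Y$, $L^p$ consists of measurable $Y$-valued maps with finite $p$-th moment of distance; the integral/expectation of an $L^1$ map is the barycenter of its distribution (minimizer of $z\mapsto\int(d^2(z,w)-d^2(w,y))$), and conditional expectation $\mathbb E[x\mid\mathcal G]$ of $x\in L^2$ is the $\mathcal G$-measurable $L^2$ map minimizing $\int d^2(z,x)$ (extended continuously to $L^1$); this applies to $Y=X$ and $Y=T_xX$. Standing setting. $(E,\mathcal E,\mu)$ and $(\Omega,\mathcal F,\mathbb P)$ are probability spaces; $X$ is a separable Hadamard space with every $T_xX$ separable. $A:E\times X\to2^{TX}$, $A(s,x)\subseteq T_xX$, is a random monotone vector field: each $A(s,\cdot)$ is monotone and $s\mapsto J_\lambda(s,x)$ is $\mathcal E/\mathcal B(X)$-measurable for every $x,\lambda$, where $J_\lambda(s,\cdot)$, $A_\lambda(s,\cdot)$ denote resolvent and Yosida approximate of $A(s,\cdot)$; moreover each $A(s,\cdot)$ satisfies the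 surjectivity condition. For $x\in X$, $S^p_A(x)$ is the set of measurable $\phi:E\to T_xX$ with $\phi(s)\in A(s,x)$ for all $s$ and $\phi\in L^p(E,T_xX,\mu)$; the mean field is $\underline A(x):=\{\int\phi\,d\mu\mid\phi\in S^1_A(x)\}$; $\mathcal Z_A(2):=\{x\mid\exists\phi\in S^2_A(x),\ \int\phi\,d\mu=0_x\}$. Given $x_0\in X$, $(\lambda_n)\subseteq(0,\infty)$ and random variables $\xi_n:\Omega\to E$, the iteration is $x_{n+1}:=J_{\lambda_n}(\xi_{n+1},x_n)$; $\mathcal F_n:=\sigma(\xi_1,\dots,\xi_n)$ ($\mathcal F_0$ trivial), $\mathbb E_n[\cdot]:=\mathbb E[\cdot\mid\mathcal F_n]$. Note $\|A_{\lambda_n}(\xi_{n+1},x_n)\|_{x_{n+1}}=d(x_n,x_{n+1})/\lambda_n$. Assumptions. (A0) $\sum_n\lambda_n^2<\infty$, $\sum_n\lambda_n=\infty$, and $(\xi_{n+1})$ is i.i.d. with distribution $\mu$. (A1) each $A(s,\cdot)$ is strongly monotone with modulus $\alpha(s)\in(0,1]$, where $\alpha:E\to(0,1]$ is measurable with $\underline\alpha:=\int\alpha\,d\mu>0$. (A2) $\underline A$ has a zero $x^*$ (i.e. $0_{x^*}\in\underline A(x^* )$) with $x^*\in\mathcal Z_A(2)$; a fixed $\phi^*\in S^2_A(x^* )$ with $\int\phi^*\,d\mu=0_{x^*}$ is chosen. (A3) $\mathbb E_n[g_{x^*}(\phi^*(\xi_{n+1}),\log_{x^*}x_n)]=0$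 a.s. for every $n\in\mathbb N$. *)

theory Defs
  imports "HOL-Probability.Probability"
begin

definition geodesic_path :: "(real \<Rightarrow> 'a::metric_space) \<Rightarrow> real \<Rightarrow> bool" where
  "geodesic_path \<gamma> l \<longleftrightarrow> l \<ge> 0 \<and>
     (\<forall>s\<in>{0..l}. \<forall>t\<in>{0..l}. dist (\<gamma> s) (\<gamma> t) = \<bar>s - t\<bar>)"

definition hadamard_space :: "'a::complete_space itself \<Rightarrow> bool" where
  "hadamard_space _ \<longleftrightarrow>
     (\<forall>x y::'a. \<exists>\<gamma>. geodesic_path \<gamma> (dist x y) \<and> \<gamma> 0 = x \<and> \<gamma> (dist x y) = y) \<and>
     (\<forall>(\<gamma>::real \<Rightarrow> 'a) l x t. geodesic_path \<gamma> l \<longrightarrow> t \<in> {0..1} \<longrightarrow>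
        (dist (\<gamma> (t * l)) x)\<^sup>2 \<le> (1 - t) * (dist (\<gamma> 0) x)\<^sup>2 + t * (dist (\<gamma> l) x)\<^sup>2
                                  - t * (1 - t) * (dist (\<gamma> 0) (\<gamma> l))\<^sup>2)"

definition separable_space :: "'a::metric_space itself \<Rightarrow> bool" where
  "separable_space _ \<longleftrightarrow> (\<exists>D::'a set. countable D \<and> closure D = UNIV)"

definition geod :: "'a::metric_space \<Rightarrow> 'a \<Rightarrow> real \<Rightarrow> 'a" where
  "geod x y = (SOME \<gamma>. geodesic_path \<gamma> (dist x y) \<and> \<gamma> 0 = x \<and> \<gamma> (dist x y) = y)"

definition cangle :: "'a::metric_space \<Rightarrow> 'a \<Rightarrow> 'a \<Rightarrow> real" where
  "cangle x p q = arccos (((dist x p)\<^sup>2 + (dist x q)\<^sup>2 - (dist p q)\<^sup>2) / (2 * dist x p * dist x q))"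

text \<open>Aleksandrov angle at x between the geodesics from x to y and from x to z (y, z \<noteq> x).
  Every nonconstant geodesic issuing from x is an initial piece of some such geod x y.\<close>
definition alex_angle :: "'a::metric_space \<Rightarrow> 'a \<Rightarrow> 'a \<Rightarrow> real" where
  "alex_angle x y z = Lim (at_right 0 \<times>\<^sub>F at_right 0)
                          (\<lambda>(s,t). cangle x (geod x y s) (geod x z t))"

text \<open>Points of the completion of the space of directions at x are represented by
  angle-Cauchy sequences of points different from x (each point y standing for the
  direction of the geodesic from x to y).\<close>
definition dir_seq :: "'a::metric_space \<Rightarrow> (nat \<Rightarrow> 'a) \<Rightarrow> bool" where
  "dir_seq x \<sigma> \<longleftrightarrow> (\<forall>k. \<sigma> k \<noteq> x) \<and>
     (\<forall>e>0. \<exists>N. \<forall>m\<ge>N. \<forall>n\<ge>N. alex_angle x (\<sigma> m) (\<sigma> n) < e)"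

definition dir_angle :: "'a::metric_space \<Rightarrow> (nat \<Rightarrow> 'a) \<Rightarrow> (nat \<Rightarrow> 'a) \<Rightarrow> real" where
  "dir_angle x \<sigma> \<tau> = lim (\<lambda>k. alex_angle x (\<sigma> k) (\<tau> k))"

text \<open>A tangent vector t\<gamma> is represented by a pair (t, \<sigma>); two representatives denote
  the same element of T_xX iff their d_x-distance is 0.\<close>
type_synonym 'a tvec = "real \<times> (nat \<Rightarrow> 'a)"

definition tangent :: "'a::metric_space \<Rightarrow> 'a tvec set" where
  "tangent x = {(t, \<sigma>). t = 0 \<or> (t > 0 \<and> dir_seq x \<sigma>)}"

definition tzero :: "'a \<Rightarrow> 'a tvec" where
  "tzero x = (0, \<lambda>_. x)"

definition tnorm :: "'a tvec \<Rightarrow> real" where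
  "tnorm u = fst u"

definition tinner :: "'a::metric_space \<Rightarrow> 'a tvec \<Rightarrow> 'a tvec \<Rightarrow> real" where
  "tinner x u v = fst u * fst v * cos (dir_angle x (snd u) (snd v))"

definition tdist :: "'a::metric_space \<Rightarrow> 'a tvec \<Rightarrow> 'a tvec \<Rightarrow> real" where
  "tdist x u v = sqrt ((fst u)\<^sup>2 + (fst v)\<^sup>2 - 2 * tinner x u v)"

definition tscale :: "real \<Rightarrow> 'a tvec \<Rightarrow> 'a tvec" where
  "tscale c u = (c * fst u, snd u)"

definition tlog :: "'a::metric_space \<Rightarrow> 'a \<Rightarrow> 'a tvec" where
  "tlog x a = (if a = x then tzero x else (dist x a, \<lambda>_. a))"

text \<open>Membership in a subset of T_xX, up to identification of representatives.\<close>
definition tmem :: "'a::metric_space \<Rightarrow> 'a tvec \<Rightarrow> 'a tvec set \<Rightarrow> bool" where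
  "tmem x u S \<longleftrightarrow> (\<exists>v\<in>S. tdist x u v = 0)"

definition tangent_separable :: "'a::metric_space \<Rightarrow> bool" where
  "tangent_separable x \<longleftrightarrow> (\<exists>D \<subseteq> tangent x. countable D \<and>
      (\<forall>u\<in>tangent x. \<forall>e>0. \<exists>v\<in>D. tdist x u v < e))"

definition vf_monotone :: "('a::metric_space \<Rightarrow> 'a tvec set) \<Rightarrow> bool" where
  "vf_monotone B \<longleftrightarrow> (\<forall>x y. \<forall>u\<in>B x. \<forall>v\<in>B y.
       tinner x u (tlog x y) \<le> - tinner y v (tlog y x))"

definition vf_strongly_monotone :: "('a::metric_space \<Rightarrow> 'a tvec set) \<Rightarrow> real \<Rightarrow> bool" where
  "vf_strongly_monotone B \<alpha> \<longleftrightarrow> \<alpha> > 0 \<and> (\<forall>x y. \<forall>u\<in>B x. \<forall>v\<in>B y.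
       tinner x u (tlog x y) \<le> - tinner y v (tlog y x) - \<alpha> * (dist x y)\<^sup>2)"

definition is_resolvent :: "('a::metric_space \<Rightarrow> 'a tvec set) \<Rightarrow> real \<Rightarrow> 'a \<Rightarrow> 'a \<Rightarrow> bool" where
  "is_resolvent B lam x z \<longleftrightarrow> tmem z (tscale (1 / lam) (tlog z x)) (B z)"

definition resolvent :: "('a::metric_space \<Rightarrow> 'a tvec set) \<Rightarrow> real \<Rightarrow> 'a \<Rightarrow> 'a" where
  "resolvent B lam x = (THE z. is_resolvent B lam x z)"

definition surjectivity_cond :: "('a::metric_space \<Rightarrow> 'a tvec set) \<Rightarrow> bool" where
  "surjectivity_cond B \<longleftrightarrow> (\<forall>lam>0. \<forall>x. \<exists>z. is_resolvent B lam x z)"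

definition random_monotone_vf ::
  "'e measure \<Rightarrow> ('e \<Rightarrow> 'a::metric_space \<Rightarrow> 'a tvec set) \<Rightarrow> bool" where
  "random_monotone_vf \<mu> A \<longleftrightarrow>
     (\<forall>s\<in>space \<mu>. (\<forall>x. A s x \<subseteq> tangent x) \<and> vf_monotone (A s) \<and> surjectivity_cond (A s)) \<and>
     (\<forall>lam>0. \<forall>x. (\<lambda>s. resolvent (A s) lam x) \<in> measurable \<mu> borel)"

text \<open>Measurability of a T_xX-valued map (T_xX separable, so Borel sets are generated by
  the distance functions to points).\<close>
definition tmeasurable :: "'e measure \<Rightarrow> 'a::metric_space \<Rightarrow> ('e \<Rightarrow> 'a tvec) \<Rightarrow> bool" where
  "tmeasurable \<mu> x \<phi> \<longleftrightarrow> (\<forall>v\<in>tangent x. (\<lambda>s. tdist x (\<phi> s) v) \<in> borel_measurable \<mu>)"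

definition tLp :: "nat \<Rightarrow> 'e measure \<Rightarrow> 'a::metric_space \<Rightarrow> ('e \<Rightarrow> 'a tvec) \<Rightarrow> bool" where
  "tLp p \<mu> x \<phi> \<longleftrightarrow> tmeasurable \<mu> x \<phi> \<and> (\<forall>s\<in>space \<mu>. \<phi> s \<in> tangent x) \<and>
     (\<integral>\<^sup>+ s. ennreal ((tdist x (\<phi> s) (tzero x)) ^ p) \<partial>\<mu>) < \<infinity>"

definition selections :: "nat \<Rightarrow> 'e measure \<Rightarrow> ('e \<Rightarrow> 'a::metric_space \<Rightarrow> 'a tvec set) \<Rightarrow> 'a
    \<Rightarrow> ('e \<Rightarrow> 'a tvec) set" where
  "selections p \<mu> A x = {\<phi>. tLp p \<mu> x \<phi> \<and> (\<forall>s\<in>space \<mu>. tmem x (\<phi> s) (A s x))}"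

text \<open>b is (a representative of) the barycenter / integral of \<phi> in T_xX.\<close>
definition tbarycenter :: "'e measure \<Rightarrow> 'a::metric_space \<Rightarrow> ('e \<Rightarrow> 'a tvec) \<Rightarrow> 'a tvec \<Rightarrow> bool" where
  "tbarycenter \<mu> x \<phi> b \<longleftrightarrow> b \<in> tangent x \<and>
     (\<forall>z\<in>tangent x.
        (\<integral>s. (tdist x b (\<phi> s))\<^sup>2 - (tdist x (\<phi> s) (tzero x))\<^sup>2 \<partial>\<mu>)
          \<le> (\<integral>s. (tdist x z (\<phi> s))\<^sup>2 - (tdist x (\<phi> s) (tzero x))\<^sup>2 \<partial>\<mu>))"

primrec prox_iter :: "('e \<Rightarrow> 'a::metric_space \<Rightarrow> 'a tvec set) \<Rightarrow> (nat \<Rightarrow> real)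
    \<Rightarrow> (nat \<Rightarrow> 'w \<Rightarrow> 'e) \<Rightarrow> 'a \<Rightarrow> nat \<Rightarrow> 'w \<Rightarrow> 'a" where
  "prox_iter A lam \<xi> x0 0 \<omega> = x0"
| "prox_iter A lam \<xi> x0 (Suc n) \<omega> =
     resolvent (A (\<xi> (Suc n) \<omega>)) (lam n) (prox_iter A lam \<xi> x0 n \<omega>)"

text \<open>F_n = sigma(xi_1, ..., xi_n) on Omega (trivial for n = 0).\<close>
definition natural_filtration :: "'w measure \<Rightarrow> 'e measure \<Rightarrow> (nat \<Rightarrow> 'w \<Rightarrow> 'e) \<Rightarrow> nat \<Rightarrow> 'w measure" where
  "natural_filtration P \<mu> \<xi> n =
     sigma (space P) (\<Union>i\<in>{1..n}. {\<xi> i -` B \<inter> space P | B. B \<in> sets \<mu>})"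

end

theory Submission
  imports Defs
begin

text \<open>
  Each proximal step obeys the deterministic estimate
    d^2(x_{n+1}, x*) <= d^2(x_n, x*) - 2 lam_n <phi*(xi_{n+1}), log_{x*} x_n> + lam_n^2 |phi*(xi_{n+1})|^2.
  It comes from testing monotonicity of A(xi_{n+1}, .) between x_{n+1}, where
  (1/lam_n) log_{x_{n+1}} x_n lies in A, and x*, where phi*(xi_{n+1}) lies in A: the first
  inner product is bounded below through the CAT(0) cosine law, and
  <phi*(xi_{n+1}), log_{x*} x_{n+1}> is traded for <phi*(xi_{n+1}), log_{x*} x_n> because
  a |-> <u, log_{x*} a> is |u|-Lipschitz; the error is absorbed by completing the square.
  Taking expectations, the cross term vanishes by (A3), and as xi_{n+1} has law mu the last
  term contributes lam_n^2 times the integral of |phi*|^2. Summing over the steps gives the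
  bound, which is finite because the lam_n are square summable.

  The geometry behind this is that of Alexandrov angles. In a CAT(0) space comparison
  angles along geodesics decrease towards the vertex, so the Alexandrov angle is their
  infimum; it satisfies the triangle inequality (by comparison with a planar configuration)
  and the cosine law. This makes <u, log_x a> independent of the representative of the
  tangent vector u, and shows that resolvents are unique and continuous, so that the
  iterates are measurable.
\<close>

section \<open>Geodesics and comparison angles\<close>

lemma geod_geodesic_path:
  fixes x y :: "'a::complete_space"
  assumes "hadamard_space TYPE('a)"
  shows "geodesic_path (geod x y) (dist x y)" "geod x y 0 = x" "geod x y (dist x y) = y"
proof -
  have "\<exists>\<gamma>. geodesic_path \<gamma> (dist x y) \<and> \<gamma> 0 = x \<and> \<gamma> (dist x y) = y"
    using assms unfolding hadamard_space_def by blast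
  then have "geodesic_path (geod x y) (dist x y) \<and> geod x y 0 = x \<and> geod x y (dist x y) = y"
    unfolding geod_def by (rule someI_ex)
  then show "geodesic_path (geod x y) (dist x y)" "geod x y 0 = x" "geod x y (dist x y) = y"
    by auto
qed

lemma dist_geod:
  fixes x y :: "'a::complete_space"
  assumes "hadamard_space TYPE('a)" and "0 \<le> s" "s \<le> dist x y"
  shows "dist x (geod x y s) = s"
  using geod_geodesic_path[OF assms(1), of x y] assms(2,3) unfolding geodesic_path_def by force

lemma geod_neq_start:
  fixes x y :: "'a::complete_space"
  assumes "hadamard_space TYPE('a)" and "0 < s" "s \<le> dist x y"
  shows "geod x y s \<noteq> x"
  using dist_geod[OF assms(1), of s x y] assms(2,3) by auto

lemma cat0_geod:
  fixes x y q :: "'a::complete_space"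
  assumes H: "hadamard_space TYPE('a)" and s: "0 < s'" "s' \<le> s" "s \<le> dist x y"
  shows "(dist (geod x y s') q)\<^sup>2 \<le> (1 - s'/s) * (dist x q)\<^sup>2 + (s'/s) * (dist (geod x y s) q)\<^sup>2
            - (s'/s) * (1 - s'/s) * s\<^sup>2"
proof -
  have "geodesic_path (geod x y) s"
    using geod_geodesic_path(1)[OF H, of x y] s unfolding geodesic_path_def by auto
  moreover have "s'/s \<in> {0..1}" "s'/s * s = s'" using s by auto
  ultimately have "(dist (geod x y s') q)\<^sup>2 \<le> (1 - s'/s) * (dist (geod x y 0) q)\<^sup>2
      + (s'/s) * (dist (geod x y s) q)\<^sup>2 - (s'/s) * (1 - s'/s) * (dist (geod x y 0) (geod x y s))\<^sup>2"
    using H unfolding hadamard_space_def by metis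
  then show ?thesis using dist_geod[OF H, of s x y] s by (simp add: geod_geodesic_path[OF H])
qed

definition ccos :: "'a::metric_space \<Rightarrow> 'a \<Rightarrow> 'a \<Rightarrow> real" where
  "ccos x p q = ((dist x p)\<^sup>2 + (dist x q)\<^sup>2 - (dist p q)\<^sup>2) / (2 * dist x p * dist x q)"

lemma cangle_def_ccos: "cangle x p q = arccos (ccos x p q)"
  unfolding cangle_def ccos_def by simp

lemma ccos_commute: "ccos x p q = ccos x q p"
  unfolding ccos_def by (simp add: dist_commute algebra_simps)

lemma cangle_commute: "cangle x p q = cangle x q p"
  by (simp add: cangle_def_ccos ccos_commute)

lemma ccos_bounds:
  fixes x p q :: "'a::metric_space"
  assumes "p \<noteq> x" "q \<noteq> x"
  shows "-1 \<le> ccos x p q" "ccos x p q \<le> 1"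
proof -
  let ?a = "dist x p" and ?b = "dist x q" and ?c = "dist p q"
  have pos: "?a > 0" "?b > 0" using assms by auto
  have t: "?c \<le> ?a + ?b" "\<bar>?a - ?b\<bar> \<le> ?c"
    using dist_triangle[of p q x] dist_triangle[of x p q] dist_triangle[of x q p]
    by (simp_all add: dist_commute abs_le_iff)
  have "?c\<^sup>2 \<le> (?a + ?b)\<^sup>2" by (rule power_mono[OF t(1)]) simp
  moreover have "(?a - ?b)\<^sup>2 \<le> ?c\<^sup>2" by (metis t(2) abs_ge_zero power2_abs power_mono)
  ultimately have "-(2 * ?a * ?b) \<le> ?a\<^sup>2 + ?b\<^sup>2 - ?c\<^sup>2" "?a\<^sup>2 + ?b\<^sup>2 - ?c\<^sup>2 \<le> 2 * ?a * ?b"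
    by (simp_all add: power2_eq_square algebra_simps)
  then show "-1 \<le> ccos x p q" "ccos x p q \<le> 1"
    unfolding ccos_def using pos by (simp_all add: le_divide_eq divide_le_eq)
qed

lemma cangle_bounds:
  fixes x p q :: "'a::metric_space"
  assumes "p \<noteq> x" "q \<noteq> x"
  shows "0 \<le> cangle x p q" "cangle x p q \<le> pi"
  using ccos_bounds[OF assms] by (auto simp: cangle_def_ccos intro: arccos_lbound arccos_ubound)

lemma dist_sq_cangle:
  fixes x p q :: "'a::metric_space"
  assumes "p \<noteq> x" "q \<noteq> x"
  shows "(dist p q)\<^sup>2 = (dist x p)\<^sup>2 + (dist x q)\<^sup>2 - 2 * dist x p * dist x q * cos (cangle x p q)"
proof -
  have "cos (cangle x p q) = ccos x p q"
    using ccos_bounds[OF assms] by (simp add: cangle_def_ccos cos_arccos)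
  moreover have "dist x p > 0" "dist x q > 0" using assms by auto
  ultimately show ?thesis unfolding ccos_def by (simp add: field_simps)
qed

lemma cangle_geod_mono:
  fixes x y q :: "'a::complete_space"
  assumes H: "hadamard_space TYPE('a)" and s: "0 < s'" "s' \<le> s" "s \<le> dist x y" and q: "q \<noteq> x"
  shows "cangle x (geod x y s') q \<le> cangle x (geod x y s) q"
proof -
  let ?b = "dist x q" and ?c = "dist (geod x y s) q" and ?c' = "dist (geod x y s') q"
  have d: "dist x (geod x y s') = s'" "dist x (geod x y s) = s" using dist_geod[OF H] s by auto
  have n: "geod x y s' \<noteq> x" "geod x y s \<noteq> x" using geod_neq_start[OF H] s by auto
  have b: "?b > 0" using q by simp
  have "s * ?c'\<^sup>2 \<le> s * ((1 - s'/s) * ?b\<^sup>2 + (s'/s) * ?c\<^sup>2 - (s'/s) * (1 - s'/s) * s\<^sup>2)"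
    using cat0_geod[OF H s, of q] s by (intro mult_left_mono) auto
  also have "\<dots> = (s - s') * ?b\<^sup>2 + s' * ?c\<^sup>2 - s' * (s - s') * s"
    using s by (simp add: field_simps power2_eq_square)
  finally have "(s\<^sup>2 + ?b\<^sup>2 - ?c\<^sup>2) * s' \<le> (s'\<^sup>2 + ?b\<^sup>2 - ?c'\<^sup>2) * s"
    by (simp add: power2_eq_square algebra_simps)
  then have "(s\<^sup>2 + ?b\<^sup>2 - ?c\<^sup>2) * s' * (2 * ?b) \<le> (s'\<^sup>2 + ?b\<^sup>2 - ?c'\<^sup>2) * s * (2 * ?b)"
    using b by (intro mult_right_mono) auto
  then have "ccos x (geod x y s) q \<le> ccos x (geod x y s') q"
    unfolding ccos_def d using s b by (simp add: field_simps)
  then show ?thesis unfolding cangle_def_ccos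
    using ccos_bounds[OF n(1) q] ccos_bounds[OF n(2) q] by (intro arccos_le_arccos) auto
qed

section \<open>Alexandrov angles\<close>

definition geod_cangle :: "'a::metric_space \<Rightarrow> 'a \<Rightarrow> 'a \<Rightarrow> real \<Rightarrow> real \<Rightarrow> real" where
  "geod_cangle x y z s t = cangle x (geod x y s) (geod x z t)"

definition geod_cangles :: "'a::metric_space \<Rightarrow> 'a \<Rightarrow> 'a \<Rightarrow> real set" where
  "geod_cangles x y z =
     {geod_cangle x y z s t | s t. 0 < s \<and> s \<le> dist x y \<and> 0 < t \<and> t \<le> dist x z}"

lemma geod_cangle_in_geod_cangles:
  "0 < s \<Longrightarrow> s \<le> dist x y \<Longrightarrow> 0 < t \<Longrightarrow> t \<le> dist x z \<Longrightarrow> geod_cangle x y z s t \<in> geod_cangles x y z"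
  unfolding geod_cangles_def by blast

lemma geod_cangles_commute: "geod_cangles x y z = geod_cangles x z y"
  unfolding geod_cangles_def geod_cangle_def using cangle_commute by blast

lemma geod_cangle_mono:
  fixes x y z :: "'a::complete_space"
  assumes H: "hadamard_space TYPE('a)"
    and s: "0 < s'" "s' \<le> s" "s \<le> dist x y" and t: "0 < t'" "t' \<le> t" "t \<le> dist x z"
  shows "geod_cangle x y z s' t' \<le> geod_cangle x y z s t"
proof -
  have "geod_cangle x y z s' t' \<le> cangle x (geod x y s) (geod x z t')"
    unfolding geod_cangle_def by (rule cangle_geod_mono[OF H s geod_neq_start[OF H t(1)]]) (use t in auto)
  also have "\<dots> \<le> cangle x (geod x y s) (geod x z t)"
    using cangle_geod_mono[OF H t geod_neq_start[OF H, of s x y]] s by (simp add: cangle_commute)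
  finally show ?thesis unfolding geod_cangle_def .
qed

lemma geod_cangle_bounds:
  fixes x y z :: "'a::complete_space"
  assumes H: "hadamard_space TYPE('a)"
    and s: "0 < s" "s \<le> dist x y" and t: "0 < t" "t \<le> dist x z"
  shows "0 \<le> geod_cangle x y z s t" "geod_cangle x y z s t \<le> pi"
  unfolding geod_cangle_def using cangle_bounds[OF geod_neq_start[OF H s] geod_neq_start[OF H t]] by auto

lemma geod_cangles_bdd_below:
  fixes x y z :: "'a::complete_space"
  assumes "hadamard_space TYPE('a)"
  shows "bdd_below (geod_cangles x y z)"
  unfolding geod_cangles_def bdd_below_def using geod_cangle_bounds[OF assms] by blast

lemma alex_angle_eq_Inf:
  fixes x y z :: "'a::complete_space"
  assumes H: "hadamard_space TYPE('a)" and y: "y \<noteq> x" and z: "z \<noteq> x"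
  shows "alex_angle x y z = Inf (geod_cangles x y z)"
proof -
  let ?I = "Inf (geod_cangles x y z)" and ?f = "\<lambda>(s, t). geod_cangle x y z s t"
  have ne: "geod_cangles x y z \<noteq> {}"
    using geod_cangle_in_geod_cangles[of "dist x y" x y "dist x z" z] y z by auto
  have "(?f \<longlongrightarrow> ?I) (at_right 0 \<times>\<^sub>F at_right 0)"
  proof (rule order_tendstoI)
    fix a assume a: "a < ?I"
    show "\<forall>\<^sub>F p in at_right 0 \<times>\<^sub>F at_right 0. a < ?f p"
      unfolding eventually_prod_filter
    proof (intro exI conjI allI impI)
      show "\<forall>\<^sub>F s in at_right 0. s \<in> {0<..<dist x y}"
        by (intro eventually_at_right_real) (use y in auto)
      show "\<forall>\<^sub>F t in at_right 0. t \<in> {0<..<dist x z}"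
        by (intro eventually_at_right_real) (use z in auto)
      fix s t :: real assume "s \<in> {0<..<dist x y}" "t \<in> {0<..<dist x z}"
      then have "?I \<le> geod_cangle x y z s t"
        by (intro cInf_lower[OF geod_cangle_in_geod_cangles geod_cangles_bdd_below[OF H]]) auto
      then show "a < ?f (s, t)" using a by simp
    qed
  next
    fix a assume "?I < a"
    then obtain s0 t0 where st: "geod_cangle x y z s0 t0 < a"
        "0 < s0" "s0 \<le> dist x y" "0 < t0" "t0 \<le> dist x z"
      using cInf_lessD[OF ne] unfolding geod_cangles_def by blast
    show "\<forall>\<^sub>F p in at_right 0 \<times>\<^sub>F at_right 0. ?f p < a"
      unfolding eventually_prod_filter
    proof (intro exI conjI allI impI)
      show "\<forall>\<^sub>F s in at_right 0. s \<in> {0<..<s0}" "\<forall>\<^sub>F t in at_right 0. t \<in> {0<..<t0}"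
        by (rule eventually_at_right_real, fact)+
      fix s t :: real assume "s \<in> {0<..<s0}" "t \<in> {0<..<t0}"
      then show "?f (s, t) < a" using geod_cangle_mono[OF H, of s s0 x y t t0 z] st by auto
    qed
  qed
  moreover have "at_right (0::real) \<times>\<^sub>F at_right (0::real) \<noteq> bot"
    by (simp add: prod_filter_eq_bot)
  ultimately show ?thesis
    unfolding alex_angle_def geod_cangle_def[abs_def] using tendsto_Lim by blast
qed

lemma alex_angle_le_geod_cangle:
  fixes x y z :: "'a::complete_space"
  assumes H: "hadamard_space TYPE('a)"
    and s: "0 < s" "s \<le> dist x y" and t: "0 < t" "t \<le> dist x z"
  shows "alex_angle x y z \<le> geod_cangle x y z s t"
proof -
  have "y \<noteq> x" "z \<noteq> x" using s t by auto
  show ?thesis unfolding alex_angle_eq_Inf[OF H \<open>y \<noteq> x\<close> \<open>z \<noteq> x\<close>]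
    by (rule cInf_lower[OF geod_cangle_in_geod_cangles[OF s t] geod_cangles_bdd_below[OF H]])
qed

lemma alex_angle_approx:
  fixes x y z :: "'a::complete_space"
  assumes H: "hadamard_space TYPE('a)" and y: "y \<noteq> x" and z: "z \<noteq> x" and e: "e > 0"
  obtains r where "0 < r" "r \<le> dist x y" "r \<le> dist x z"
    "\<And>s t. 0 < s \<Longrightarrow> s \<le> r \<Longrightarrow> 0 < t \<Longrightarrow> t \<le> r \<Longrightarrow> geod_cangle x y z s t < alex_angle x y z + e"
proof -
  have ne: "geod_cangles x y z \<noteq> {}"
    using geod_cangle_in_geod_cangles[of "dist x y" x y "dist x z" z] y z by auto
  have "Inf (geod_cangles x y z) < alex_angle x y z + e" using alex_angle_eq_Inf[OF H y z] e by simp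
  then obtain s0 t0 where st: "geod_cangle x y z s0 t0 < alex_angle x y z + e"
      "0 < s0" "s0 \<le> dist x y" "0 < t0" "t0 \<le> dist x z"
    using cInf_lessD[OF ne] unfolding geod_cangles_def by blast
  show ?thesis
  proof (rule that[of "min s0 t0"])
    fix s t :: real assume "0 < s" "s \<le> min s0 t0" "0 < t" "t \<le> min s0 t0"
    then show "geod_cangle x y z s t < alex_angle x y z + e"
      using geod_cangle_mono[OF H, of s s0 x y t t0 z] st by auto
  qed (use st in auto)
qed

lemma alex_angle_nonneg:
  fixes x y z :: "'a::complete_space"
  assumes H: "hadamard_space TYPE('a)" and "y \<noteq> x" "z \<noteq> x"
  shows "0 \<le> alex_angle x y z"
  unfolding alex_angle_eq_Inf[OF assms]
  using geod_cangle_in_geod_cangles[of "dist x y" x y "dist x z" z] assms(2,3) geod_cangle_bounds[OF H]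
  by (intro cInf_greatest) (auto simp: geod_cangles_def)

lemma alex_angle_le_cangle:
  fixes x y z :: "'a::complete_space"
  assumes H: "hadamard_space TYPE('a)" and "y \<noteq> x" "z \<noteq> x"
  shows "alex_angle x y z \<le> cangle x y z"
  using alex_angle_le_geod_cangle[OF H, of "dist x y" x y "dist x z" z] assms(2,3)
  by (simp add: geod_cangle_def geod_geodesic_path[OF H])

lemma alex_angle_le_pi:
  fixes x y z :: "'a::complete_space"
  assumes H: "hadamard_space TYPE('a)" and "y \<noteq> x" "z \<noteq> x"
  shows "alex_angle x y z \<le> pi"
  using alex_angle_le_cangle[OF assms] cangle_bounds[OF assms(2,3)] by linarith

lemma alex_angle_commute:
  fixes x y z :: "'a::complete_space"
  assumes H: "hadamard_space TYPE('a)" and "y \<noteq> x" "z \<noteq> x"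
  shows "alex_angle x y z = alex_angle x z y"
  using assms by (simp add: alex_angle_eq_Inf geod_cangles_commute)

lemma alex_angle_self:
  fixes x y :: "'a::complete_space"
  assumes H: "hadamard_space TYPE('a)" and y: "y \<noteq> x"
  shows "alex_angle x y y = 0"
proof -
  have "ccos x y y = 1" using y by (simp add: ccos_def power2_eq_square)
  then have "cangle x y y = 0" by (simp add: cangle_def_ccos)
  then show ?thesis using alex_angle_le_cangle[OF H y y] alex_angle_nonneg[OF H y y] by simp
qed

lemma alex_angle_cosine_law:
  fixes x y z :: "'a::complete_space"
  assumes H: "hadamard_space TYPE('a)" and y: "y \<noteq> x" and z: "z \<noteq> x"
  shows "(dist x y)\<^sup>2 + (dist x z)\<^sup>2 - 2 * dist x y * dist x z * cos (alex_angle x y z) \<le> (dist y z)\<^sup>2"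
proof -
  have "cos (cangle x y z) \<le> cos (alex_angle x y z)"
    using alex_angle_le_cangle[OF H y z] cangle_bounds[OF y z] alex_angle_nonneg[OF H y z]
    by (subst cos_mono_le_eq) auto
  then show ?thesis
    using dist_sq_cangle[OF y z] mult_left_mono[of _ _ "2 * dist x y * dist x z"] by fastforce
qed

lemma polar_dist_sq:
  fixes A B a b :: real
  shows "(A * cos a - B * cos b)\<^sup>2 + (A * sin a - B * sin b)\<^sup>2 = A\<^sup>2 + B\<^sup>2 - 2 * A * B * cos (a - b)"
proof -
  have "(A * cos a - B * cos b)\<^sup>2 + (A * sin a - B * sin b)\<^sup>2
      = A\<^sup>2 * ((sin a)\<^sup>2 + (cos a)\<^sup>2) + B\<^sup>2 * ((sin b)\<^sup>2 + (cos b)\<^sup>2)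
        - 2 * A * B * (cos a * cos b + sin a * sin b)"
    by algebra
  then show ?thesis by (simp add: cos_diff)
qed

text \<open>The ray from the origin at angle \<open>\<beta>\<close> meets the chord from \<open>e(1, 0)\<close> to
  \<open>e(cos \<alpha>, sin \<alpha>)\<close> in the point \<open>\<rho>(cos \<beta>, sin \<beta>) = (1 - r) e(1, 0) + r e(cos \<alpha>, sin \<alpha>)\<close>.\<close>

lemma ray_meets_chord:
  fixes e \<alpha> \<beta> :: real
  assumes e: "0 < e" and ab: "0 < \<beta>" "\<beta> < \<alpha>" "\<alpha> < pi"
  obtains \<rho> r where "0 < \<rho>" "0 < r" "r < 1"
    "e - \<rho> * cos \<beta> = r * (e - e * cos \<alpha>)" "\<rho> * sin \<beta> = r * (e * sin \<alpha>)"
proof -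
  have sin_pos: "0 < sin \<beta>" "0 < sin (\<alpha> - \<beta>)" "0 < sin \<alpha>" using ab by (auto intro: sin_gt_zero)
  define r where "r = sin \<beta> / (sin \<beta> + sin (\<alpha> - \<beta>))"
  define \<rho> where "\<rho> = r * e * sin \<alpha> / sin \<beta>"
  have r: "0 < r" "r < 1" using sin_pos by (auto simp: r_def field_simps)
  have \<rho>: "0 < \<rho>" using r e sin_pos by (simp add: \<rho>_def)
  have "sin \<beta> = r * (sin \<beta> + sin (\<alpha> - \<beta>))" using sin_pos by (simp add: r_def)
  then have "(1 - r) * sin \<beta> + r * cos \<alpha> * sin \<beta> = r * sin \<alpha> * cos \<beta>"
    by (simp add: sin_diff algebra_simps)
  then have "((1 - r) * e + r * e * cos \<alpha>) * sin \<beta> = r * e * sin \<alpha> * cos \<beta>"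
    by (metis (no_types, opaque_lifting) distrib_right mult.assoc mult.commute)
  then have "e - \<rho> * cos \<beta> = r * (e - e * cos \<alpha>)" "\<rho> * sin \<beta> = r * (e * sin \<alpha>)"
    using sin_pos by (simp_all add: \<rho>_def field_simps)
  with \<rho> r show ?thesis using that by blast
qed

lemma plane_ray_chord_distances:
  fixes e \<alpha> \<beta> L :: real
  assumes e: "0 < e" and ab: "0 < \<beta>" "\<beta> < \<alpha>" "\<alpha> < pi"
    and L: "L\<^sup>2 = e\<^sup>2 + e\<^sup>2 - 2 * e * e * cos \<alpha>"
  obtains \<rho> r where "0 < \<rho>" "\<rho> \<le> e" "0 < r" "r < 1"
    "e\<^sup>2 + \<rho>\<^sup>2 - 2 * e * \<rho> * cos \<beta> = (r * L)\<^sup>2"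
    "\<rho>\<^sup>2 + e\<^sup>2 - 2 * \<rho> * e * cos (\<alpha> - \<beta>) = ((1 - r) * L)\<^sup>2"
proof -
  obtain \<rho> r where \<rho>: "0 < \<rho>" and r: "0 < r" "r < 1"
    and q: "e - \<rho> * cos \<beta> = r * (e - e * cos \<alpha>)" "\<rho> * sin \<beta> = r * (e * sin \<alpha>)"
    using ray_meets_chord[OF assms(1-4)] .
  have chord: "L\<^sup>2 = (e - e * cos \<alpha>)\<^sup>2 + (e * sin \<alpha>)\<^sup>2"
    using L polar_dist_sq[of e 0 e \<alpha>] by simp
  have "e\<^sup>2 + \<rho>\<^sup>2 - 2 * e * \<rho> * cos \<beta> = (e - \<rho> * cos \<beta>)\<^sup>2 + (\<rho> * sin \<beta>)\<^sup>2"
    using polar_dist_sq[of e 0 \<rho> \<beta>] by simp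
  also have "\<dots> = r\<^sup>2 * ((e - e * cos \<alpha>)\<^sup>2 + (e * sin \<alpha>)\<^sup>2)"
    unfolding q by (simp add: power2_eq_square algebra_simps)
  finally have eq1: "e\<^sup>2 + \<rho>\<^sup>2 - 2 * e * \<rho> * cos \<beta> = (r * L)\<^sup>2"
    by (simp add: chord power_mult_distrib)
  have "\<rho>\<^sup>2 + e\<^sup>2 - 2 * \<rho> * e * cos (\<alpha> - \<beta>) = (\<rho> * cos \<beta> - e * cos \<alpha>)\<^sup>2 + (\<rho> * sin \<beta> - e * sin \<alpha>)\<^sup>2"
    using polar_dist_sq[of \<rho> \<beta> e \<alpha>] by (simp add: cos_diff mult.commute)
  also have "\<rho> * cos \<beta> - e * cos \<alpha> = (1 - r) * (e - e * cos \<alpha>)" using q(1) by (simp add: algebra_simps)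
  also have "\<rho> * sin \<beta> - e * sin \<alpha> = - ((1 - r) * (e * sin \<alpha>))" using q(2) by (simp add: algebra_simps)
  also have "((1 - r) * (e - e * cos \<alpha>))\<^sup>2 + (- ((1 - r) * (e * sin \<alpha>)))\<^sup>2
      = (1 - r)\<^sup>2 * ((e - e * cos \<alpha>)\<^sup>2 + (e * sin \<alpha>)\<^sup>2)"
    by (simp add: power2_eq_square algebra_simps)
  finally have eq2: "\<rho>\<^sup>2 + e\<^sup>2 - 2 * \<rho> * e * cos (\<alpha> - \<beta>) = ((1 - r) * L)\<^sup>2"
    by (simp add: chord power_mult_distrib)
  have "(\<rho> * cos \<beta>)\<^sup>2 + (\<rho> * sin \<beta>)\<^sup>2 = \<rho>\<^sup>2 * ((sin \<beta>)\<^sup>2 + (cos \<beta>)\<^sup>2)"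
    by (simp only: power_mult_distrib distrib_left add.commute)
  then have "\<rho>\<^sup>2 = (e - (e - \<rho> * cos \<beta>))\<^sup>2 + (\<rho> * sin \<beta>)\<^sup>2" by simp
  also have "\<dots> = e\<^sup>2 - r * (1 - r) * ((e - e * cos \<alpha>)\<^sup>2 + (e * sin \<alpha>)\<^sup>2)"
    unfolding q power_mult_distrib sin_squared_eq by (simp add: power2_eq_square algebra_simps)
  also have "\<dots> \<le> e\<^sup>2"
    using mult_nonneg_nonneg[of "r * (1 - r)" "(e - e * cos \<alpha>)\<^sup>2 + (e * sin \<alpha>)\<^sup>2"] r by simp
  finally have "\<rho> \<le> e" by (rule power2_le_imp_le) (use e in simp)
  with \<rho> r eq1 eq2 show ?thesis using that by blast
qed

lemma dist_less_if_cangle_less: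
  fixes x p q :: "'a::metric_space"
  assumes pq: "p \<noteq> x" "q \<noteq> x" and \<gamma>: "cangle x p q < \<gamma>" "\<gamma> \<le> pi" and c: "0 \<le> c"
    and c_sq: "(dist x p)\<^sup>2 + (dist x q)\<^sup>2 - 2 * dist x p * dist x q * cos \<gamma> = c\<^sup>2"
  shows "dist p q < c"
proof -
  have "cos \<gamma> < cos (cangle x p q)"
    using cangle_bounds[OF pq] \<gamma> by (subst cos_mono_less_eq) auto
  then have "2 * dist x p * dist x q * cos \<gamma> < 2 * dist x p * dist x q * cos (cangle x p q)"
    using pq by (intro mult_strict_left_mono) auto
  then have "(dist p q)\<^sup>2 < c\<^sup>2" unfolding dist_sq_cangle[OF pq] c_sq[symmetric] by linarith
  then show ?thesis using c by (rule power2_less_imp_less)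
qed

lemma dist_ge_if_cangle_ge:
  fixes x p q :: "'a::metric_space"
  assumes pq: "p \<noteq> x" "q \<noteq> x" and \<gamma>: "\<gamma> \<le> cangle x p q" "0 \<le> \<gamma>"
    and c_sq: "(dist x p)\<^sup>2 + (dist x q)\<^sup>2 - 2 * dist x p * dist x q * cos \<gamma> = c\<^sup>2"
  shows "c \<le> dist p q"
proof -
  have "cos (cangle x p q) \<le> cos \<gamma>"
    using cangle_bounds[OF pq] \<gamma> by (subst cos_mono_le_eq) auto
  then have "2 * dist x p * dist x q * cos (cangle x p q) \<le> 2 * dist x p * dist x q * cos \<gamma>"
    by (intro mult_left_mono) auto
  then have "c\<^sup>2 \<le> (dist p q)\<^sup>2" unfolding dist_sq_cangle[OF pq] c_sq[symmetric] by linarith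
  then show ?thesis by (rule power2_le_imp_le) simp
qed

text \<open>Were the inequality false, geodesic points \<open>p, q, o\<close> near \<open>x\<close> in the directions of
  \<open>y, w, z\<close> would satisfy \<open>d(p, q) + d(q, o) < d(p, o)\<close>, by comparison with the planar
  configuration of \<open>plane_ray_chord_distances\<close>.\<close>

lemma alex_angle_triangle:
  fixes x y z w :: "'a::complete_space"
  assumes H: "hadamard_space TYPE('a)" and y: "y \<noteq> x" and z: "z \<noteq> x" and w: "w \<noteq> x"
  shows "alex_angle x y z \<le> alex_angle x y w + alex_angle x w z"
proof (rule ccontr)
  let ?A = "alex_angle x y z" and ?A1 = "alex_angle x y w" and ?A2 = "alex_angle x w z"
  define \<delta> where "\<delta> = (?A - ?A1 - ?A2) / 3"
  assume "\<not> ?A \<le> ?A1 + ?A2"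
  then have \<delta>: "\<delta> > 0" and A: "?A = ?A1 + ?A2 + 3 * \<delta>" by (simp_all add: \<delta>_def field_simps)
  obtain r1 where r1: "0 < r1" "r1 \<le> dist x y" "r1 \<le> dist x w"
    and b1: "\<And>s t. 0 < s \<Longrightarrow> s \<le> r1 \<Longrightarrow> 0 < t \<Longrightarrow> t \<le> r1 \<Longrightarrow> geod_cangle x y w s t < ?A1 + \<delta>"
    using alex_angle_approx[OF H y w \<delta>] by blast
  obtain r2 where r2: "0 < r2" "r2 \<le> dist x w" "r2 \<le> dist x z"
    and b2: "\<And>s t. 0 < s \<Longrightarrow> s \<le> r2 \<Longrightarrow> 0 < t \<Longrightarrow> t \<le> r2 \<Longrightarrow> geod_cangle x w z s t < ?A2 + \<delta>"
    using alex_angle_approx[OF H w z \<delta>] by blast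
  define e where "e = min r1 r2"
  have e: "0 < e" "e \<le> r1" "e \<le> r2" using r1 r2 by (auto simp: e_def)
  define \<alpha> where "\<alpha> = ?A - \<delta> / 2"
  define \<beta> where "\<beta> = ?A1 + \<delta>"
  have ab: "0 < \<beta>" "\<beta> < \<alpha>" "\<alpha> < pi"
    using alex_angle_nonneg[OF H y w] alex_angle_nonneg[OF H w z] alex_angle_le_pi[OF H y z] \<delta> A
    unfolding \<alpha>_def \<beta>_def by linarith+
  define L where "L = sqrt (e\<^sup>2 + e\<^sup>2 - 2 * e * e * cos \<alpha>)"
  have "0 \<le> e\<^sup>2 + e\<^sup>2 - 2 * e * e * cos \<alpha>"
    using mult_left_mono[OF cos_le_one[of \<alpha>], of "2 * e * e"] by (simp add: power2_eq_square)
  then have L: "e\<^sup>2 + e\<^sup>2 - 2 * e * e * cos \<alpha> = L\<^sup>2" "0 \<le> L" by (simp_all add: L_def)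
  obtain \<rho> r where \<rho>: "0 < \<rho>" "\<rho> \<le> e" "0 < r" "r < 1"
    and eq1: "e\<^sup>2 + \<rho>\<^sup>2 - 2 * e * \<rho> * cos \<beta> = (r * L)\<^sup>2"
    and eq2: "\<rho>\<^sup>2 + e\<^sup>2 - 2 * \<rho> * e * cos (\<alpha> - \<beta>) = ((1 - r) * L)\<^sup>2"
    using plane_ray_chord_distances[OF e(1) ab L(1)[symmetric]] by blast
  let ?p = "geod x y e" and ?q = "geod x w \<rho>" and ?o = "geod x z e"
  have range: "e \<le> dist x y" "\<rho> \<le> dist x w" "e \<le> dist x z" using e r1 r2 \<rho> by auto
  have d: "dist x ?p = e" "dist x ?q = \<rho>" "dist x ?o = e"
    using dist_geod[OF H] range e(1) \<rho>(1) by auto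
  have ne: "?p \<noteq> x" "?q \<noteq> x" "?o \<noteq> x" using geod_neq_start[OF H] range e(1) \<rho>(1) by auto
  have "dist ?p ?q < r * L"
    using b1[of e \<rho>] e \<rho> ab L eq1 unfolding geod_cangle_def \<beta>_def
    by (intro dist_less_if_cangle_less[OF ne(1,2)]) (auto simp: d)
  moreover have "dist ?q ?o < (1 - r) * L"
    using b2[of \<rho> e] e \<rho> ab L eq2 A \<delta> unfolding geod_cangle_def \<alpha>_def \<beta>_def
    by (intro dist_less_if_cangle_less[OF ne(2,3)]) (auto simp: d)
  moreover have "L \<le> dist ?p ?o"
    using alex_angle_le_geod_cangle[OF H e(1) range(1) e(1) range(3)] ab L \<delta>
    unfolding geod_cangle_def \<alpha>_def
    by (intro dist_ge_if_cangle_ge[OF ne(1,3)]) (auto simp: d)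
  ultimately show False using dist_triangle[of ?p ?o ?q] by (simp add: algebra_simps)
qed

lemma alex_angle_diff_le:
  fixes x a b c d :: "'a::complete_space"
  assumes H: "hadamard_space TYPE('a)" and ne: "a \<noteq> x" "b \<noteq> x" "c \<noteq> x" "d \<noteq> x"
  shows "\<bar>alex_angle x a b - alex_angle x c d\<bar> \<le> alex_angle x a c + alex_angle x b d"
proof -
  have "alex_angle x a b \<le> alex_angle x a c + alex_angle x c b"
    "alex_angle x c b \<le> alex_angle x c d + alex_angle x d b"
    "alex_angle x c d \<le> alex_angle x c a + alex_angle x a d"
    "alex_angle x a d \<le> alex_angle x a b + alex_angle x b d"
    by (rule alex_angle_triangle[OF H]; fact ne)+
  then show ?thesis
    using alex_angle_commute[OF H, of d x b] alex_angle_commute[OF H, of c x a] ne by linarith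
qed

section \<open>Directions and the tangent cone\<close>

lemma dir_seq_const:
  fixes x a :: "'a::complete_space"
  assumes H: "hadamard_space TYPE('a)" and a: "a \<noteq> x"
  shows "dir_seq x (\<lambda>_. a)"
  unfolding dir_seq_def using alex_angle_self[OF H a] a by auto

lemma dir_seq_neq: "dir_seq x \<sigma> \<Longrightarrow> \<sigma> k \<noteq> x"
  unfolding dir_seq_def by auto

lemma dir_angle_tendsto:
  fixes x :: "'a::complete_space"
  assumes H: "hadamard_space TYPE('a)" and \<sigma>: "dir_seq x \<sigma>" and \<tau>: "dir_seq x \<tau>"
  shows "(\<lambda>k. alex_angle x (\<sigma> k) (\<tau> k)) \<longlonglongrightarrow> dir_angle x \<sigma> \<tau>"
proof -
  let ?X = "\<lambda>k. alex_angle x (\<sigma> k) (\<tau> k)"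
  have "Cauchy ?X"
  proof (rule metric_CauchyI)
    fix e :: real assume "e > 0"
    then obtain N1 N2 where
      N1: "\<And>m n. m \<ge> N1 \<Longrightarrow> n \<ge> N1 \<Longrightarrow> alex_angle x (\<sigma> m) (\<sigma> n) < e/2" and
      N2: "\<And>m n. m \<ge> N2 \<Longrightarrow> n \<ge> N2 \<Longrightarrow> alex_angle x (\<tau> m) (\<tau> n) < e/2"
      using \<sigma> \<tau> unfolding dir_seq_def by (meson half_gt_zero)
    have "dist (?X m) (?X n) < e" if "m \<ge> max N1 N2" "n \<ge> max N1 N2" for m n
      using alex_angle_diff_le[OF H, of "\<sigma> m" x "\<tau> m" "\<sigma> n" "\<tau> n"] N1[of m n] N2[of m n] that
        dir_seq_neq[OF \<sigma>] dir_seq_neq[OF \<tau>]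
      by (simp add: dist_real_def)
    then show "\<exists>M. \<forall>m\<ge>M. \<forall>n\<ge>M. dist (?X m) (?X n) < e" by blast
  qed
  then show ?thesis
    unfolding dir_angle_def by (simp add: Cauchy_convergent_iff convergent_LIMSEQ_iff)
qed

lemma dir_angle_bounds:
  fixes x :: "'a::complete_space"
  assumes H: "hadamard_space TYPE('a)" and \<sigma>: "dir_seq x \<sigma>" and \<tau>: "dir_seq x \<tau>"
  shows "0 \<le> dir_angle x \<sigma> \<tau>" "dir_angle x \<sigma> \<tau> \<le> pi"
  using dir_seq_neq[OF \<sigma>] dir_seq_neq[OF \<tau>]
  by (auto intro!: LIMSEQ_le_const[OF dir_angle_tendsto[OF assms]]
      LIMSEQ_le_const2[OF dir_angle_tendsto[OF assms]] alex_angle_nonneg[OF H] alex_angle_le_pi[OF H])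

lemma dir_angle_const: "dir_angle x (\<lambda>_. a) (\<lambda>_. b) = alex_angle x a b"
  unfolding dir_angle_def by simp

lemma dir_angle_self:
  fixes x :: "'a::complete_space"
  assumes H: "hadamard_space TYPE('a)" and \<sigma>: "dir_seq x \<sigma>"
  shows "dir_angle x \<sigma> \<sigma> = 0"
  using dir_angle_tendsto[OF H \<sigma> \<sigma>] alex_angle_self[OF H dir_seq_neq[OF \<sigma>]]
  by (simp add: LIMSEQ_const_iff)

lemma dir_angle_const_diff_le:
  fixes x a b :: "'a::complete_space"
  assumes H: "hadamard_space TYPE('a)" and \<sigma>: "dir_seq x \<sigma>" and \<tau>: "dir_seq x \<tau>"
    and a: "a \<noteq> x" and b: "b \<noteq> x"
  shows "\<bar>dir_angle x \<sigma> (\<lambda>_. a) - dir_angle x \<tau> (\<lambda>_. b)\<bar> \<le> dir_angle x \<sigma> \<tau> + alex_angle x a b"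
proof (rule LIMSEQ_le)
  show "(\<lambda>k. \<bar>alex_angle x (\<sigma> k) a - alex_angle x (\<tau> k) b\<bar>)
      \<longlonglongrightarrow> \<bar>dir_angle x \<sigma> (\<lambda>_. a) - dir_angle x \<tau> (\<lambda>_. b)\<bar>"
    using dir_angle_tendsto[OF H \<sigma> dir_seq_const[OF H a]] dir_angle_tendsto[OF H \<tau> dir_seq_const[OF H b]]
    by (intro tendsto_intros) auto
  show "(\<lambda>k. alex_angle x (\<sigma> k) (\<tau> k) + alex_angle x a b) \<longlonglongrightarrow> dir_angle x \<sigma> \<tau> + alex_angle x a b"
    by (intro tendsto_intros dir_angle_tendsto[OF H \<sigma> \<tau>])
  show "\<exists>N. \<forall>k\<ge>N. \<bar>alex_angle x (\<sigma> k) a - alex_angle x (\<tau> k) b\<bar>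
      \<le> alex_angle x (\<sigma> k) (\<tau> k) + alex_angle x a b"
    using alex_angle_diff_le[OF H dir_seq_neq[OF \<sigma>] a dir_seq_neq[OF \<tau>] b] by blast
qed

lemma tangent_fst_nonneg: "u \<in> tangent x \<Longrightarrow> 0 \<le> fst u"
  unfolding tangent_def by auto

lemma tangent_dir_seq: "u \<in> tangent x \<Longrightarrow> 0 < fst u \<Longrightarrow> dir_seq x (snd u)"
  unfolding tangent_def by auto

lemma tlog_in_tangent:
  fixes x a :: "'a::complete_space"
  assumes "hadamard_space TYPE('a)"
  shows "tlog x a \<in> tangent x"
  unfolding tlog_def tangent_def tzero_def using dir_seq_const[OF assms, of a x] by auto

lemma tscale_in_tangent: "u \<in> tangent x \<Longrightarrow> 0 < c \<Longrightarrow> tscale c u \<in> tangent x"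
  unfolding tscale_def tangent_def by auto

lemma fst_tlog [simp]: "fst (tlog x a) = dist x a"
  unfolding tlog_def tzero_def by auto

lemma tlog_self [simp]: "tlog x x = tzero x"
  unfolding tlog_def by simp

lemma tinner_tzero_right [simp]: "tinner x u (tzero x) = 0"
  unfolding tinner_def tzero_def by simp

lemma tinner_fst_zero: "fst u = 0 \<Longrightarrow> tinner x u v = 0"
  unfolding tinner_def by simp

lemma tinner_tlog:
  "a \<noteq> x \<Longrightarrow> tinner x u (tlog x a) = fst u * dist x a * cos (dir_angle x (snd u) (\<lambda>_. a))"
  unfolding tinner_def tlog_def by simp

lemma abs_tinner_le:
  assumes "0 \<le> fst u" "0 \<le> fst v"
  shows "\<bar>tinner x u v\<bar> \<le> fst u * fst v"
proof -
  have "\<bar>tinner x u v\<bar> = fst u * fst v * \<bar>cos (dir_angle x (snd u) (snd v))\<bar>"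
    unfolding tinner_def using assms by (simp add: abs_mult)
  also have "\<dots> \<le> fst u * fst v" using assms abs_cos_le_one by (intro mult_left_le) auto
  finally show ?thesis .
qed

lemma tinner_eq_tdist:
  assumes "0 \<le> fst u" "0 \<le> fst v"
  shows "tinner x u v = ((fst u)\<^sup>2 + (fst v)\<^sup>2 - (tdist x u v)\<^sup>2) / 2"
proof -
  have "tinner x u v \<le> fst u * fst v" using abs_tinner_le[OF assms, of x] by linarith
  then have "0 \<le> (fst u)\<^sup>2 + (fst v)\<^sup>2 - 2 * tinner x u v"
    using sum_squares_bound[of "fst u" "fst v"] by linarith
  then show ?thesis unfolding tdist_def by simp
qed

lemma tdist_eq_0D:
  fixes x :: "'a::complete_space"
  assumes H: "hadamard_space TYPE('a)" and u: "u \<in> tangent x" and v: "v \<in> tangent x"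
    and d: "tdist x u v = 0"
  shows "fst u = fst v" "0 < fst u \<Longrightarrow> dir_angle x (snd u) (snd v) = 0"
proof -
  let ?\<theta> = "dir_angle x (snd u) (snd v)"
  have u0: "0 \<le> fst u" and v0: "0 \<le> fst v" using u v by (simp_all add: tangent_fst_nonneg)
  have "(fst u)\<^sup>2 + (fst v)\<^sup>2 - 2 * tinner x u v = 0"
    using tinner_eq_tdist[OF u0 v0, of x] d by simp
  then have eq: "(fst u - fst v)\<^sup>2 + 2 * (fst u * fst v) * (1 - cos ?\<theta>) = 0"
    unfolding tinner_def by (simp add: power2_diff algebra_simps)
  have "0 \<le> 2 * (fst u * fst v) * (1 - cos ?\<theta>)" using u0 v0 cos_le_one[of ?\<theta>] by simp
  then have sq: "(fst u - fst v)\<^sup>2 = 0" and cos: "fst u * fst v * (1 - cos ?\<theta>) = 0"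
    using eq zero_le_power2[of "fst u - fst v"] by linarith+
  from sq show "fst u = fst v" by simp
  assume "0 < fst u"
  with \<open>fst u = fst v\<close> cos have "cos ?\<theta> = 1" by simp
  moreover have "0 \<le> ?\<theta>" "?\<theta> \<le> pi"
    using dir_angle_bounds[OF H tangent_dir_seq[OF u] tangent_dir_seq[OF v]] \<open>0 < fst u\<close>
      \<open>fst u = fst v\<close> by auto
  ultimately show "?\<theta> = 0" using cos_inj_pi[of ?\<theta> 0] by simp
qed

lemma tinner_tlog_cong:
  fixes x a :: "'a::complete_space"
  assumes H: "hadamard_space TYPE('a)" and u: "u \<in> tangent x" and v: "v \<in> tangent x"
    and d: "tdist x u v = 0"
  shows "tinner x u (tlog x a) = tinner x v (tlog x a)"
proof (cases "a = x \<or> fst u = 0")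
  case True
  then show ?thesis using tdist_eq_0D(1)[OF H u v d] by (auto simp: tinner_fst_zero)
next
  case False
  then have a: "a \<noteq> x" and pos: "0 < fst u" using tangent_fst_nonneg[OF u] by auto
  have fst_eq: "fst u = fst v" using tdist_eq_0D(1)[OF H u v d] .
  have \<sigma>: "dir_seq x (snd u)" and \<tau>: "dir_seq x (snd v)"
    using tangent_dir_seq[OF u pos] tangent_dir_seq[OF v] pos fst_eq by auto
  have "\<bar>dir_angle x (snd u) (\<lambda>_. a) - dir_angle x (snd v) (\<lambda>_. a)\<bar> \<le> 0"
    using dir_angle_const_diff_le[OF H \<sigma> \<tau> a a] tdist_eq_0D(2)[OF H u v d pos]
      alex_angle_self[OF H a] by simp
  then show ?thesis by (simp add: tinner_tlog[OF a] fst_eq)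
qed

lemma tinner_tlog_lipschitz:
  fixes x a b :: "'a::complete_space"
  assumes H: "hadamard_space TYPE('a)" and u: "u \<in> tangent x"
  shows "\<bar>tinner x u (tlog x a) - tinner x u (tlog x b)\<bar> \<le> fst u * dist a b"
proof -
  have u0: "0 \<le> fst u" using tangent_fst_nonneg[OF u] .
  have bound: "\<bar>tinner x u (tlog x c)\<bar> \<le> fst u * dist x c" for c
    using abs_tinner_le[OF u0, of "tlog x c" x] by simp
  consider "fst u = 0" | "a = x" | "b = x" | "0 < fst u" "a \<noteq> x" "b \<noteq> x" using u0 by linarith
  then show ?thesis
  proof cases
    case 4
    let ?\<alpha> = "dir_angle x (snd u) (\<lambda>_. a)" and ?\<beta> = "dir_angle x (snd u) (\<lambda>_. b)"
      and ?c = "alex_angle x a b" and ?A = "dist x a" and ?B = "dist x b"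
    have \<sigma>: "dir_seq x (snd u)" using tangent_dir_seq[OF u \<open>0 < fst u\<close>] .
    have "\<bar>?\<alpha> - ?\<beta>\<bar> \<le> ?c"
      using dir_angle_const_diff_le[OF H \<sigma> \<sigma> 4(2,3)] dir_angle_self[OF H \<sigma>] by simp
    then have "cos ?c \<le> cos (?\<alpha> - ?\<beta>)"
      using alex_angle_nonneg[OF H 4(2,3)] alex_angle_le_pi[OF H 4(2,3)]
        dir_angle_bounds[OF H \<sigma> dir_seq_const[OF H 4(2)]] dir_angle_bounds[OF H \<sigma> dir_seq_const[OF H 4(3)]]
      by (subst cos_abs_real[symmetric], subst cos_mono_le_eq) auto
    then have "(?A * cos ?\<alpha> - ?B * cos ?\<beta>)\<^sup>2 + (?A * sin ?\<alpha> - ?B * sin ?\<beta>)\<^sup>2 \<le> (dist a b)\<^sup>2"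
      using alex_angle_cosine_law[OF H 4(2,3)] mult_left_mono[of _ _ "2 * ?A * ?B"]
      unfolding polar_dist_sq by fastforce
    then have "(?A * cos ?\<alpha> - ?B * cos ?\<beta>)\<^sup>2 \<le> (dist a b)\<^sup>2"
      using zero_le_power2[of "?A * sin ?\<alpha> - ?B * sin ?\<beta>"] by linarith
    then have "\<bar>?A * cos ?\<alpha> - ?B * cos ?\<beta>\<bar> \<le> dist a b"
      using abs_le_square_iff[of _ "dist a b"] by simp
    moreover have "tinner x u (tlog x a) - tinner x u (tlog x b) = fst u * (?A * cos ?\<alpha> - ?B * cos ?\<beta>)"
      by (simp add: tinner_tlog[OF 4(2)] tinner_tlog[OF 4(3)] algebra_simps)
    ultimately show ?thesis using u0 by (simp add: abs_mult mult_left_mono)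
  qed (use bound[of a] bound[of b] in \<open>auto simp: tinner_fst_zero dist_commute\<close>)
qed

lemma tinner_tlog_lower_bound:
  fixes z x y :: "'a::complete_space"
  assumes H: "hadamard_space TYPE('a)" and c: "0 \<le> c"
  shows "c * ((dist z x)\<^sup>2 + (dist z y)\<^sup>2 - (dist x y)\<^sup>2) / 2 \<le> tinner z (tscale c (tlog z x)) (tlog z y)"
proof (cases "x = z \<or> y = z")
  case True
  then show ?thesis by (auto simp: tscale_def tzero_def tinner_def dist_commute)
next
  case False
  then have x: "x \<noteq> z" and y: "y \<noteq> z" by auto
  have "tinner z (tscale c (tlog z x)) (tlog z y) = c * (dist z x * dist z y * cos (alex_angle z x y))"
    unfolding tinner_tlog[OF y] using x by (simp add: tscale_def tlog_def dir_angle_const)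
  moreover have "((dist z x)\<^sup>2 + (dist z y)\<^sup>2 - (dist x y)\<^sup>2) / 2 \<le> dist z x * dist z y * cos (alex_angle z x y)"
    using alex_angle_cosine_law[OF H x y] by simp
  ultimately show ?thesis using mult_left_mono[OF _ c] by fastforce
qed

section \<open>Resolvents\<close>

lemma tmem_tinner_tlog:
  fixes x :: "'a::complete_space"
  assumes H: "hadamard_space TYPE('a)" and u: "u \<in> tangent x" and S: "S \<subseteq> tangent x"
    and "tmem x u S"
  obtains v where "v \<in> S" "\<And>a. tinner x v (tlog x a) = tinner x u (tlog x a)"
proof -
  obtain v where v: "v \<in> S" "tdist x u v = 0" using \<open>tmem x u S\<close> unfolding tmem_def by blast
  have "tinner x v (tlog x a) = tinner x u (tlog x a)" for a
    using tinner_tlog_cong[OF H u _ v(2)] v(1) S by auto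
  with v(1) show ?thesis by (rule that)
qed

lemma is_resolvent_tinner_lower:
  fixes x z :: "'a::complete_space"
  assumes H: "hadamard_space TYPE('a)" and tan: "\<And>y. B y \<subseteq> tangent y"
    and lam: "0 < lam" and "is_resolvent B lam x z"
  obtains v where "v \<in> B z"
    "\<And>a. ((dist z x)\<^sup>2 + (dist z a)\<^sup>2 - (dist x a)\<^sup>2) / (2 * lam) \<le> tinner z v (tlog z a)"
proof -
  let ?u = "tscale (1 / lam) (tlog z x)"
  have "?u \<in> tangent z" using tscale_in_tangent[OF tlog_in_tangent[OF H]] lam by simp
  moreover have "tmem z ?u (B z)" using \<open>is_resolvent B lam x z\<close> unfolding is_resolvent_def .
  ultimately obtain v where v: "v \<in> B z" "\<And>a. tinner z v (tlog z a) = tinner z ?u (tlog z a)"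
    using tmem_tinner_tlog[OF H _ tan] by blast
  show ?thesis
  proof (rule that[OF v(1)])
    fix a
    show "((dist z x)\<^sup>2 + (dist z a)\<^sup>2 - (dist x a)\<^sup>2) / (2 * lam) \<le> tinner z v (tlog z a)"
      using tinner_tlog_lower_bound[OF H, of "1 / lam" z x a] lam by (simp add: v(2))
  qed
qed

lemma resolvent_dist_sq_ineq:
  fixes x1 x2 z1 z2 :: "'a::complete_space"
  assumes H: "hadamard_space TYPE('a)" and tan: "\<And>z. B z \<subseteq> tangent z" and mono: "vf_monotone B"
    and lam: "0 < lam" and r1: "is_resolvent B lam x1 z1" and r2: "is_resolvent B lam x2 z2"
  shows "2 * (dist z1 z2)\<^sup>2 \<le> (dist x1 z2)\<^sup>2 - (dist z1 x1)\<^sup>2 + (dist x2 z1)\<^sup>2 - (dist z2 x2)\<^sup>2"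
proof -
  obtain v1 where v1: "v1 \<in> B z1"
    "((dist z1 x1)\<^sup>2 + (dist z1 z2)\<^sup>2 - (dist x1 z2)\<^sup>2) / (2 * lam) \<le> tinner z1 v1 (tlog z1 z2)"
    using is_resolvent_tinner_lower[OF H tan lam r1] by metis
  obtain v2 where v2: "v2 \<in> B z2"
    "((dist z2 x2)\<^sup>2 + (dist z2 z1)\<^sup>2 - (dist x2 z1)\<^sup>2) / (2 * lam) \<le> tinner z2 v2 (tlog z2 z1)"
    using is_resolvent_tinner_lower[OF H tan lam r2] by metis
  have "tinner z1 v1 (tlog z1 z2) + tinner z2 v2 (tlog z2 z1) \<le> 0"
    using mono v1(1) v2(1) unfolding vf_monotone_def by fastforce
  then have "(((dist z1 x1)\<^sup>2 + (dist z1 z2)\<^sup>2 - (dist x1 z2)\<^sup>2)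
      + ((dist z2 x2)\<^sup>2 + (dist z2 z1)\<^sup>2 - (dist x2 z1)\<^sup>2)) / (2 * lam) \<le> 0"
    using v1(2) v2(2) unfolding add_divide_distrib by linarith
  then have "((dist z1 x1)\<^sup>2 + (dist z1 z2)\<^sup>2 - (dist x1 z2)\<^sup>2)
      + ((dist z2 x2)\<^sup>2 + (dist z2 z1)\<^sup>2 - (dist x2 z1)\<^sup>2) \<le> 0"
    using lam by (simp add: divide_le_0_iff)
  then show ?thesis by (simp add: dist_commute)
qed

lemma resolvent_unique:
  fixes x z1 z2 :: "'a::complete_space"
  assumes H: "hadamard_space TYPE('a)" and tan: "\<And>z. B z \<subseteq> tangent z" and mono: "vf_monotone B"
    and lam: "0 < lam" and "is_resolvent B lam x z1" "is_resolvent B lam x z2"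
  shows "z1 = z2"
  using resolvent_dist_sq_ineq[OF assms] by (simp add: dist_commute)

lemma is_resolvent_resolvent:
  fixes x :: "'a::complete_space"
  assumes H: "hadamard_space TYPE('a)" and tan: "\<And>z. B z \<subseteq> tangent z" and mono: "vf_monotone B"
    and surj: "surjectivity_cond B" and lam: "0 < lam"
  shows "is_resolvent B lam x (resolvent B lam x)"
proof -
  have "\<exists>!z. is_resolvent B lam x z"
    using surj lam resolvent_unique[OF H tan mono lam] unfolding surjectivity_cond_def by blast
  then show ?thesis unfolding resolvent_def by (rule theI')
qed

lemma resolvent_dist_le:
  fixes x1 x2 :: "'a::complete_space"
  assumes H: "hadamard_space TYPE('a)" and tan: "\<And>z. B z \<subseteq> tangent z" and mono: "vf_monotone B"
    and surj: "surjectivity_cond B" and lam: "0 < lam"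
  shows "dist (resolvent B lam x1) (resolvent B lam x2)
           \<le> sqrt (3 * (dist x1 x2)\<^sup>2 + 4 * dist x1 (resolvent B lam x1) * dist x1 x2)"
proof -
  let ?z1 = "resolvent B lam x1" and ?z2 = "resolvent B lam x2"
  define D R \<zeta> where "D = dist x1 x2" and "R = dist x1 ?z1" and "\<zeta> = dist ?z1 ?z2"
  have main: "2 * \<zeta>\<^sup>2 \<le> (dist x1 ?z2)\<^sup>2 - (dist ?z1 x1)\<^sup>2 + (dist x2 ?z1)\<^sup>2 - (dist ?z2 x2)\<^sup>2"
    unfolding \<zeta>_def by (intro resolvent_dist_sq_ineq[OF H tan mono lam] is_resolvent_resolvent[OF assms])
  have sq_diff: "a\<^sup>2 - b\<^sup>2 \<le> D * (a + b)" if "a - b \<le> D" "0 \<le> a" "0 \<le> b" for a b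
    using mult_right_mono[OF that(1), of "a + b"] that(2,3) by (simp add: power2_eq_square algebra_simps)
  have tri: "dist x1 ?z2 \<le> R + \<zeta>" "dist x1 ?z2 - dist x2 ?z2 \<le> D" "dist x2 ?z2 \<le> D + R + \<zeta>"
    "dist x2 ?z1 - dist x1 ?z1 \<le> D" "dist x2 ?z1 \<le> D + R"
    using dist_triangle[of x1 ?z2 ?z1] dist_triangle[of x1 ?z2 x2] dist_triangle[of x2 ?z2 x1]
      dist_triangle[of x2 ?z1 x1]
    unfolding D_def R_def \<zeta>_def by (simp_all add: dist_commute)
  have "(dist x1 ?z2)\<^sup>2 - (dist x2 ?z2)\<^sup>2 \<le> D * (dist x1 ?z2 + dist x2 ?z2)"
    by (rule sq_diff[OF tri(2)]) simp_all
  also have "\<dots> \<le> D * (2 * \<zeta> + 2 * R + D)" using tri(1,3) by (intro mult_left_mono) (auto simp: D_def)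
  moreover have "(dist x2 ?z1)\<^sup>2 - (dist x1 ?z1)\<^sup>2 \<le> D * (dist x2 ?z1 + dist x1 ?z1)"
    by (rule sq_diff[OF tri(4)]) simp_all
  moreover have "\<dots> \<le> D * (D + 2 * R)" using tri(5) by (intro mult_left_mono) (auto simp: D_def R_def)
  moreover have "2 * D * \<zeta> \<le> D\<^sup>2 + \<zeta>\<^sup>2" by (rule sum_squares_bound)
  ultimately have "\<zeta>\<^sup>2 \<le> 3 * D\<^sup>2 + 4 * R * D"
    using main by (simp add: dist_commute power2_eq_square algebra_simps)
  then show ?thesis unfolding D_def R_def \<zeta>_def by (rule real_le_rsqrt)
qed

lemma isCont_resolvent:
  fixes y :: "'a::complete_space"
  assumes H: "hadamard_space TYPE('a)" and tan: "\<And>z. B z \<subseteq> tangent z" and mono: "vf_monotone B"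
    and surj: "surjectivity_cond B" and lam: "0 < lam"
  shows "isCont (resolvent B lam) y"
proof -
  let ?R = "dist y (resolvent B lam y)"
  have "((\<lambda>x. dist y x) \<longlongrightarrow> 0) (at y)"
    using tendsto_dist_iff[THEN iffD1, OF tendsto_ident_at[of y UNIV]] by (simp add: dist_commute)
  then have "((\<lambda>x. sqrt (3 * (dist y x)\<^sup>2 + 4 * ?R * dist y x)) \<longlongrightarrow> sqrt (3 * 0\<^sup>2 + 4 * ?R * 0)) (at y)"
    by (intro tendsto_intros)
  then have lim: "((\<lambda>x. sqrt (3 * (dist y x)\<^sup>2 + 4 * ?R * dist y x)) \<longlongrightarrow> 0) (at y)" by simp
  have "dist (resolvent B lam x) (resolvent B lam y) \<le> sqrt (3 * (dist y x)\<^sup>2 + 4 * ?R * dist y x)"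
    for x using resolvent_dist_le[OF assms, of y x] by (simp add: dist_commute)
  then have "((\<lambda>x. dist (resolvent B lam x) (resolvent B lam y)) \<longlongrightarrow> 0) (at y)"
    by (intro tendsto_sandwich[OF _ _ tendsto_const lim]) (simp_all add: always_eventually)
  then show ?thesis unfolding isCont_def by (rule tendsto_dist_iff[THEN iffD2])
qed

section \<open>Measurability of the iteration\<close>

lemma separable_approx:
  fixes Y :: "'w \<Rightarrow> 'a::metric_space"
  assumes "separable_space TYPE('a)" and Y: "Y \<in> borel_measurable M"
  obtains e :: "nat \<Rightarrow> 'a" and idx :: "nat \<Rightarrow> 'a \<Rightarrow> nat"
  where "\<And>y. (\<lambda>k. e (idx k y)) \<longlonglongrightarrow> y" and "\<And>k. (\<lambda>\<omega>. idx k (Y \<omega>)) \<in> measurable M (count_space UNIV)"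
proof -
  obtain D :: "'a set" where D: "countable D" "closure D = UNIV"
    using assms(1) unfolding separable_space_def by blast
  define e where "e = from_nat_into D"
  define idx where "idx k y = (LEAST i. dist y (e i) < 1 / Suc k)" for k y
  have "\<exists>i. dist y (e i) < r" if "0 < r" for y r
  proof -
    obtain d where d: "d \<in> D" "dist y d < r" using closure_approachableD[of y D r] D(2) \<open>0 < r\<close> by auto
    have "e (to_nat_on D d) = d" unfolding e_def by (rule from_nat_into_to_nat_on[OF D(1) d(1)])
    with d(2) show ?thesis by metis
  qed
  then have idx: "dist y (e (idx k y)) < 1 / Suc k" for y k
    unfolding idx_def by (rule LeastI_ex) simp
  show ?thesis
  proof
    fix y
    have "(\<lambda>k. dist (e (idx k y)) y) \<longlonglongrightarrow> 0"
    proof (rule tendsto_sandwich[OF _ _ tendsto_const LIMSEQ_inverse_real_of_nat])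
      show "\<forall>\<^sub>F k in sequentially. 0 \<le> dist (e (idx k y)) y" by simp
      show "\<forall>\<^sub>F k in sequentially. dist (e (idx k y)) y \<le> inverse (real (Suc k))"
        using idx by (intro always_eventually allI) (simp add: dist_commute less_imp_le inverse_eq_divide)
    qed
    then show "(\<lambda>k. e (idx k y)) \<longlonglongrightarrow> y" by (rule tendsto_dist_iff[THEN iffD2])
  next
    fix k
    have "(\<lambda>\<omega>. dist (Y \<omega>) (e i)) \<in> borel_measurable M" for i
      using Y by (intro borel_measurable_continuous_on[OF _ Y] continuous_intros)
    then show "(\<lambda>\<omega>. idx k (Y \<omega>)) \<in> measurable M (count_space UNIV)"
      unfolding idx_def by (intro measurable_Least) (simp add: pred_def borel_measurable_less)
  qed
qed

lemma measurable_Caratheodory_compose: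
  fixes F :: "'e \<Rightarrow> 'a::metric_space \<Rightarrow> 'b::metric_space"
  assumes sep: "separable_space TYPE('a)"
    and meas: "\<And>a. (\<lambda>s. F s a) \<in> borel_measurable \<mu>"
    and cont: "\<And>s. s \<in> space \<mu> \<Longrightarrow> continuous_on UNIV (F s)"
    and \<xi>: "\<xi> \<in> measurable P \<mu>" and Y: "Y \<in> borel_measurable P"
  shows "(\<lambda>\<omega>. F (\<xi> \<omega>) (Y \<omega>)) \<in> borel_measurable P"
proof (rule separable_approx[OF sep Y])
  fix e :: "nat \<Rightarrow> 'a" and idx
  assume e: "\<And>y. (\<lambda>k. e (idx k y)) \<longlonglongrightarrow> y"
    and idx: "\<And>k. (\<lambda>\<omega>. idx k (Y \<omega>)) \<in> measurable P (count_space UNIV)"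
  show ?thesis
  proof (rule borel_measurable_LIMSEQ_metric)
    fix k
    show "(\<lambda>\<omega>. F (\<xi> \<omega>) (e (idx k (Y \<omega>)))) \<in> borel_measurable P"
      using measurable_compose_countable[OF measurable_compose[OF \<xi> meas] idx] by simp
  next
    fix \<omega> assume "\<omega> \<in> space P"
    then have "\<xi> \<omega> \<in> space \<mu>" using \<xi> by (rule measurable_space[rotated])
    then show "(\<lambda>k. F (\<xi> \<omega>) (e (idx k (Y \<omega>)))) \<longlonglongrightarrow> F (\<xi> \<omega>) (Y \<omega>)"
      by (rule continuous_on_tendsto_compose[OF cont e]) simp_all
  qed
qed

lemma random_monotone_vfD:
  assumes "random_monotone_vf \<mu> A" and "s \<in> space \<mu>"
  shows "A s x \<subseteq> tangent x" "vf_monotone (A s)" "surjectivity_cond (A s)"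
  using assms unfolding random_monotone_vf_def by blast+

lemma random_monotone_vf_measurable:
  "random_monotone_vf \<mu> A \<Longrightarrow> 0 < lam \<Longrightarrow> (\<lambda>s. resolvent (A s) lam x) \<in> borel_measurable \<mu>"
  unfolding random_monotone_vf_def by blast

lemma prox_iter_measurable:
  fixes A :: "'e \<Rightarrow> 'a::complete_space \<Rightarrow> 'a tvec set"
  assumes H: "hadamard_space TYPE('a)" and sep: "separable_space TYPE('a)"
    and A: "random_monotone_vf \<mu> A" and lam: "\<And>n. 0 < lam n"
    and \<xi>: "\<And>n. \<xi> (Suc n) \<in> measurable P \<mu>"
  shows "prox_iter A lam \<xi> x0 n \<in> borel_measurable P"
proof (induction n)
  case (Suc n)
  have "continuous_on UNIV (resolvent (A s) (lam n))" if "s \<in> space \<mu>" for s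
    using isCont_resolvent[OF H random_monotone_vfD[OF A that] lam]
    by (intro continuous_at_imp_continuous_on) auto
  from measurable_Caratheodory_compose[OF sep random_monotone_vf_measurable[OF A lam] this \<xi> Suc.IH]
  show ?case by simp
qed simp

lemma continuous_on_tinner_tlog:
  fixes x :: "'a::complete_space"
  assumes H: "hadamard_space TYPE('a)" and u: "u \<in> tangent x"
  shows "continuous_on UNIV (\<lambda>a. tinner x u (tlog x a))"
  using tinner_tlog_lipschitz[OF H u] tangent_fst_nonneg[OF u]
  by (intro lipschitz_on_continuous_on[OF lipschitz_onI, of _ _ "fst u"]) (auto simp: dist_real_def)

lemma tzero_in_tangent: "tzero x \<in> tangent x"
  unfolding tzero_def tangent_def by auto

lemma tdist_tzero: "tdist x u (tzero x) = \<bar>fst u\<bar>"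
  unfolding tdist_def tinner_tzero_right by (simp add: tzero_def)

lemma tLp_tinner_tlog_measurable:
  fixes x :: "'a::complete_space"
  assumes H: "hadamard_space TYPE('a)" and \<phi>: "tLp p \<mu> x \<phi>"
  shows "(\<lambda>s. tinner x (\<phi> s) (tlog x c)) \<in> borel_measurable \<mu>"
proof -
  have tan: "\<phi> s \<in> tangent x" if "s \<in> space \<mu>" for s using \<phi> that unfolding tLp_def by blast
  have meas: "(\<lambda>s. tdist x (\<phi> s) v) \<in> borel_measurable \<mu>" if "v \<in> tangent x" for v
    using \<phi> that unfolding tLp_def tmeasurable_def by blast
  have expr: "(\<lambda>s. ((tdist x (\<phi> s) (tzero x))\<^sup>2 + (dist x c)\<^sup>2 - (tdist x (\<phi> s) (tlog x c))\<^sup>2) / 2)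
      \<in> borel_measurable \<mu>"
    using meas[OF tzero_in_tangent] meas[OF tlog_in_tangent[OF H]] by measurable
  have eq: "tinner x (\<phi> s) (tlog x c)
      = ((tdist x (\<phi> s) (tzero x))\<^sup>2 + (dist x c)\<^sup>2 - (tdist x (\<phi> s) (tlog x c))\<^sup>2) / 2"
    if "s \<in> space \<mu>" for s
    using tinner_eq_tdist[of "\<phi> s" "tlog x c" x] tangent_fst_nonneg[OF tan[OF that]]
    by (simp add: tdist_tzero)
  show ?thesis by (rule measurable_cong[THEN iffD2, OF eq expr])
qed

lemma tLp_tinner_tlog_compose_measurable:
  fixes x :: "'a::complete_space"
  assumes H: "hadamard_space TYPE('a)" and sep: "separable_space TYPE('a)" and \<phi>: "tLp p \<mu> x \<phi>"
    and \<xi>: "\<xi> \<in> measurable P \<mu>" and Y: "Y \<in> borel_measurable P"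
  shows "(\<lambda>\<omega>. tinner x (\<phi> (\<xi> \<omega>)) (tlog x (Y \<omega>))) \<in> borel_measurable P"
  using \<phi> unfolding tLp_def
  by (intro measurable_Caratheodory_compose[OF sep tLp_tinner_tlog_measurable[OF H \<phi>] _ \<xi> Y]
      continuous_on_tinner_tlog[OF H]) auto

section \<open>The one-step estimate\<close>

lemma resolvent_dist_sq_le:
  fixes x a :: "'a::complete_space"
  assumes H: "hadamard_space TYPE('a)" and tan: "\<And>z. B z \<subseteq> tangent z" and mono: "vf_monotone B"
    and surj: "surjectivity_cond B" and lam: "0 < lam"
    and p: "p \<in> tangent a" and "tmem a p (B a)"
  shows "(dist (resolvent B lam x) a)\<^sup>2
           \<le> (dist x a)\<^sup>2 - 2 * lam * tinner a p (tlog a x) + lam\<^sup>2 * (tnorm p)\<^sup>2"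
proof -
  let ?z = "resolvent B lam x" and ?d = "dist x (resolvent B lam x)"
  obtain w where w: "w \<in> B a" "\<And>c. tinner a w (tlog a c) = tinner a p (tlog a c)"
    using tmem_tinner_tlog[OF H p tan \<open>tmem a p (B a)\<close>] by blast
  obtain v where v: "v \<in> B ?z"
    "((dist ?z x)\<^sup>2 + (dist ?z a)\<^sup>2 - (dist x a)\<^sup>2) / (2 * lam) \<le> tinner ?z v (tlog ?z a)"
    using is_resolvent_tinner_lower[OF H tan lam is_resolvent_resolvent[OF H tan mono surj lam]] by metis
  have "tinner ?z v (tlog ?z a) \<le> - tinner a p (tlog a ?z)"
    using mono v(1) w unfolding vf_monotone_def by metis
  also have "\<dots> \<le> - tinner a p (tlog a x) + fst p * ?d"
    using tinner_tlog_lipschitz[OF H p, of x ?z] by linarith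
  finally have "(?d\<^sup>2 + (dist ?z a)\<^sup>2 - (dist x a)\<^sup>2) / (2 * lam) \<le> - tinner a p (tlog a x) + fst p * ?d"
    using v(2) by (simp add: dist_commute)
  then have "(dist ?z a)\<^sup>2 \<le> (dist x a)\<^sup>2 - 2 * lam * tinner a p (tlog a x) + (2 * lam * fst p * ?d - ?d\<^sup>2)"
    using lam by (simp add: field_simps)
  moreover have "2 * lam * fst p * ?d - ?d\<^sup>2 \<le> lam\<^sup>2 * (fst p)\<^sup>2"
    using zero_le_power2[of "lam * fst p - ?d"] by (simp add: power2_diff power_mult_distrib algebra_simps)
  ultimately show ?thesis by (simp add: tnorm_def)
qed

lemma prox_iter_dist_sq_step:
  fixes A :: "'e \<Rightarrow> 'a::complete_space \<Rightarrow> 'a tvec set"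
  assumes H: "hadamard_space TYPE('a)" and A: "random_monotone_vf \<mu> A" and lam: "0 < lam n"
    and s: "\<xi> (Suc n) \<omega> \<in> space \<mu>" and \<phi>: "\<phi> \<in> selections p \<mu> A a"
  shows "(dist (prox_iter A lam \<xi> x0 (Suc n) \<omega>) a)\<^sup>2
     \<le> (dist (prox_iter A lam \<xi> x0 n \<omega>) a)\<^sup>2
        - 2 * lam n * tinner a (\<phi> (\<xi> (Suc n) \<omega>)) (tlog a (prox_iter A lam \<xi> x0 n \<omega>))
        + (lam n)\<^sup>2 * (tnorm (\<phi> (\<xi> (Suc n) \<omega>)))\<^sup>2"
  using \<phi> s unfolding selections_def tLp_def
  by (auto intro!: resolvent_dist_sq_le[OF H random_monotone_vfD[OF A s] lam])

lemma abs_tinner_tlog_le: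
  "u \<in> tangent a \<Longrightarrow> \<bar>tinner a u (tlog a y)\<bar> \<le> ((tnorm u)\<^sup>2 + (dist y a)\<^sup>2) / 2"
  using abs_tinner_le[of u "tlog a y" a] tangent_fst_nonneg[of u a] sum_squares_bound[of "fst u" "dist a y"]
  by (simp add: tnorm_def dist_commute)

section \<open>Expectations\<close>

lemma integral_recursive_bound:
  fixes D H N :: "nat \<Rightarrow> 'w \<Rightarrow> real" and l :: "nat \<Rightarrow> real"
  assumes D_meas: "\<And>n. D n \<in> borel_measurable M" and H_meas: "\<And>n. H n \<in> borel_measurable M"
    and N_int: "\<And>n. integrable M (N n)" and N_integral: "\<And>n. (\<integral>\<omega>. N n \<omega> \<partial>M) = K"
    and D_nonneg: "\<And>n \<omega>. 0 \<le> D n \<omega>" and N_nonneg: "\<And>n \<omega>. 0 \<le> N n \<omega>"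
    and step: "\<And>n \<omega>. \<omega> \<in> space M \<Longrightarrow> D (Suc n) \<omega> \<le> D n \<omega> - 2 * l n * H n \<omega> + (l n)\<^sup>2 * N n \<omega>"
    and cross: "\<And>n \<omega>. \<omega> \<in> space M \<Longrightarrow> \<bar>H n \<omega>\<bar> \<le> (N n \<omega> + D n \<omega>) / 2"
    and centered: "\<And>n. integrable M (H n) \<Longrightarrow> (\<integral>\<omega>. H n \<omega> \<partial>M) = 0"
    and D0: "integrable M (D 0)"
  shows "integrable M (D n) \<and> (\<integral>\<omega>. D n \<omega> \<partial>M) \<le> (\<integral>\<omega>. D 0 \<omega> \<partial>M) + K * (\<Sum>k<n. (l k)\<^sup>2)"
proof (induction n)
  case (Suc n)
  let ?B = "\<lambda>\<omega>. D n \<omega> - 2 * l n * H n \<omega> + (l n)\<^sup>2 * N n \<omega>"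
  have D_int: "integrable M (D n)" using Suc.IH by blast
  have H_int: "integrable M (H n)"
    using cross D_nonneg N_nonneg
    by (intro Bochner_Integration.integrable_bound[OF _ H_meas, of "\<lambda>\<omega>. (N n \<omega> + D n \<omega>) / 2"])
      (auto simp: N_int D_int intro!: AE_I2)
  have B_int: "integrable M ?B" using D_int H_int N_int by simp
  have DS_int: "integrable M (D (Suc n))"
    using step D_nonneg order_trans[OF D_nonneg step]
    by (intro Bochner_Integration.integrable_bound[OF B_int D_meas]) (auto intro!: AE_I2)
  have "(\<integral>\<omega>. D (Suc n) \<omega> \<partial>M) \<le> (\<integral>\<omega>. ?B \<omega> \<partial>M)"
    by (rule integral_mono[OF DS_int B_int step])
  also have "\<dots> = (\<integral>\<omega>. D n \<omega> \<partial>M) + (l n)\<^sup>2 * K"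
    using D_int H_int N_int by (simp add: centered[OF H_int] N_integral)
  also have "\<dots> \<le> (\<integral>\<omega>. D 0 \<omega> \<partial>M) + K * (\<Sum>k<Suc n. (l k)\<^sup>2)"
    using Suc.IH by (simp add: algebra_simps)
  finally show ?case using DS_int by simp
qed (simp add: D0)

lemma nn_integral_bound_of_integral_bound:
  fixes D :: "nat \<Rightarrow> 'w \<Rightarrow> real" and l :: "nat \<Rightarrow> real"
  assumes D_int: "\<And>n. integrable M (D n)" and D_nonneg: "\<And>n \<omega>. 0 \<le> D n \<omega>"
    and K: "0 \<le> K" and l: "summable (\<lambda>k. (l k)\<^sup>2)"
    and bound: "(\<integral>\<omega>. D n \<omega> \<partial>M) \<le> (\<integral>\<omega>. D 0 \<omega> \<partial>M) + K * (\<Sum>k<n. (l k)\<^sup>2)"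
  shows "(\<integral>\<^sup>+\<omega>. ennreal (D n \<omega>) \<partial>M) \<le> (\<integral>\<^sup>+\<omega>. ennreal (D 0 \<omega>) \<partial>M) + ennreal K * (\<Sum>k. ennreal ((l k)\<^sup>2))"
    and "(\<integral>\<^sup>+\<omega>. ennreal (D 0 \<omega>) \<partial>M) + ennreal K * (\<Sum>k. ennreal ((l k)\<^sup>2)) < \<infinity>"
proof -
  have nn: "(\<integral>\<^sup>+\<omega>. ennreal (D m \<omega>) \<partial>M) = ennreal (\<integral>\<omega>. D m \<omega> \<partial>M)" for m
    using D_int D_nonneg by (intro nn_integral_eq_integral) auto
  have sum: "(\<Sum>k. ennreal ((l k)\<^sup>2)) = ennreal (\<Sum>k. (l k)\<^sup>2)"
    using l by (intro suminf_ennreal_eq summable_sums) auto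
  have rhs: "(\<integral>\<^sup>+\<omega>. ennreal (D 0 \<omega>) \<partial>M) + ennreal K * (\<Sum>k. ennreal ((l k)\<^sup>2))
      = ennreal ((\<integral>\<omega>. D 0 \<omega> \<partial>M) + K * (\<Sum>k. (l k)\<^sup>2))"
    using K D_nonneg suminf_nonneg[OF l] by (simp add: nn sum ennreal_mult integral_nonneg_AE)
  have "K * (\<Sum>k<n. (l k)\<^sup>2) \<le> K * (\<Sum>k. (l k)\<^sup>2)"
    using K by (intro mult_left_mono sum_le_suminf[OF l]) auto
  with bound show "(\<integral>\<^sup>+\<omega>. ennreal (D n \<omega>) \<partial>M) \<le> (\<integral>\<^sup>+\<omega>. ennreal (D 0 \<omega>) \<partial>M) + ennreal K * (\<Sum>k. ennreal ((l k)\<^sup>2))"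
    by (simp only: nn[of n] rhs) (intro ennreal_leI, linarith)
  show "(\<integral>\<^sup>+\<omega>. ennreal (D 0 \<omega>) \<partial>M) + ennreal K * (\<Sum>k. ennreal ((l k)\<^sup>2)) < \<infinity>"
    unfolding rhs by simp
qed

lemma (in finite_measure) integral_eq_0_if_real_cond_exp_AE_0:
  assumes "subalgebra M F" and "integrable M f" and "AE x in M. real_cond_exp M F f x = 0"
  shows "(\<integral>x. f x \<partial>M) = 0"
proof -
  interpret finite_measure_subalgebra M F by unfold_locales (rule assms(1))
  have "(\<integral>x. f x \<partial>M) = (\<integral>x. real_cond_exp M F f x \<partial>M)"
    by (rule real_cond_exp_int(2)[OF assms(2), symmetric])
  also have "\<dots> = 0" using assms(3) by (rule integral_eq_zero_AE)
  finally show ?thesis .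
qed

lemma natural_filtration_subalgebra:
  assumes \<xi>: "\<And>n. \<xi> (Suc n) \<in> measurable P \<mu>"
  shows "subalgebra P (natural_filtration P \<mu> \<xi> n)"
proof -
  let ?G = "\<Union>i\<in>{1..n}. {\<xi> i -` B \<inter> space P | B. B \<in> sets \<mu>}"
  have "\<xi> i \<in> measurable P \<mu>" if "i \<in> {1..n}" for i
    using \<xi>[of "i - 1"] that by simp
  then have "?G \<subseteq> sets P" by (auto intro: measurable_sets)
  moreover have "?G \<subseteq> Pow (space P)" by auto
  ultimately show ?thesis
    unfolding subalgebra_def natural_filtration_def
    using sets_measure_of[of ?G] sets.sigma_sets_subset[of ?G P] by (simp add: space_measure_of_conv)
qed

lemma tLp2_norm_sq:
  assumes "tLp 2 \<mu> x \<phi>"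
  shows "integrable \<mu> (\<lambda>s. (tnorm (\<phi> s))\<^sup>2)"
    and "(\<integral>\<^sup>+s. ennreal ((tnorm (\<phi> s))\<^sup>2) \<partial>\<mu>) = ennreal (\<integral>s. (tnorm (\<phi> s))\<^sup>2 \<partial>\<mu>)"
proof -
  have eq: "(tnorm (\<phi> s))\<^sup>2 = (tdist x (\<phi> s) (tzero x))\<^sup>2" if "s \<in> space \<mu>" for s
    using assms that tangent_fst_nonneg[of "\<phi> s" x] unfolding tLp_def by (simp add: tdist_tzero tnorm_def)
  have "(\<lambda>s. tdist x (\<phi> s) (tzero x)) \<in> borel_measurable \<mu>"
    using assms tzero_in_tangent unfolding tLp_def tmeasurable_def by blast
  then have "(\<lambda>s. (tdist x (\<phi> s) (tzero x))\<^sup>2) \<in> borel_measurable \<mu>" by measurable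
  with eq have meas: "(\<lambda>s. (tnorm (\<phi> s))\<^sup>2) \<in> borel_measurable \<mu>" by (rule measurable_cong[THEN iffD2])
  have "(\<integral>\<^sup>+s. ennreal ((tnorm (\<phi> s))\<^sup>2) \<partial>\<mu>) = (\<integral>\<^sup>+s. ennreal ((tdist x (\<phi> s) (tzero x))\<^sup>2) \<partial>\<mu>)"
    by (rule nn_integral_cong) (simp add: eq)
  then have "(\<integral>\<^sup>+s. ennreal ((tnorm (\<phi> s))\<^sup>2) \<partial>\<mu>) < \<infinity>" using assms unfolding tLp_def by simp
  with meas show int: "integrable \<mu> (\<lambda>s. (tnorm (\<phi> s))\<^sup>2)" by (intro integrableI_nonneg) auto
  show "(\<integral>\<^sup>+s. ennreal ((tnorm (\<phi> s))\<^sup>2) \<partial>\<mu>) = ennreal (\<integral>s. (tnorm (\<phi> s))\<^sup>2 \<partial>\<mu>)"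
    by (rule nn_integral_eq_integral[OF int]) simp
qed

lemma prox_iter_integral_dist_sq_le:
  fixes A :: "'e \<Rightarrow> 'a::complete_space \<Rightarrow> 'a tvec set" and \<phi> :: "'e \<Rightarrow> 'a tvec"
  assumes H: "hadamard_space TYPE('a)" and sep: "separable_space TYPE('a)"
    and prob: "prob_space P" and rmvf: "random_monotone_vf \<mu> A" and lam_pos: "\<And>n. 0 < lam n"
    and \<xi>_meas: "\<And>n. \<xi> (Suc n) \<in> measurable P \<mu>" and \<xi>_distr: "\<And>n. distr P \<mu> (\<xi> (Suc n)) = \<mu>"
    and \<phi>_sel: "\<phi> \<in> selections 2 \<mu> A a"
    and centered: "\<And>n. AE \<omega> in P. real_cond_exp P (natural_filtration P \<mu> \<xi> n)
               (\<lambda>\<omega>. tinner a (\<phi> (\<xi> (Suc n) \<omega>)) (tlog a (prox_iter A lam \<xi> x0 n \<omega>))) \<omega> = 0"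
  shows "integrable P (\<lambda>\<omega>. (dist (prox_iter A lam \<xi> x0 n \<omega>) a)\<^sup>2)
    \<and> (\<integral>\<omega>. (dist (prox_iter A lam \<xi> x0 n \<omega>) a)\<^sup>2 \<partial>P)
        \<le> (dist x0 a)\<^sup>2 + (\<integral>s. (tnorm (\<phi> s))\<^sup>2 \<partial>\<mu>) * (\<Sum>k<n. (lam k)\<^sup>2)"
proof -
  interpret P: prob_space P by (rule prob)
  let ?X = "prox_iter A lam \<xi> x0"
  define D where "D n \<omega> = (dist (?X n \<omega>) a)\<^sup>2" for n \<omega>
  define H where "H n \<omega> = tinner a (\<phi> (\<xi> (Suc n) \<omega>)) (tlog a (?X n \<omega>))" for n \<omega>
  define N where "N n \<omega> = (tnorm (\<phi> (\<xi> (Suc n) \<omega>)))\<^sup>2" for n \<omega>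
  define K where "K = (\<integral>s. (tnorm (\<phi> s))\<^sup>2 \<partial>\<mu>)"
  have \<phi>_tLp: "tLp 2 \<mu> a \<phi>" and \<phi>_tan: "\<And>s. s \<in> space \<mu> \<Longrightarrow> \<phi> s \<in> tangent a"
    using \<phi>_sel unfolding selections_def tLp_def by auto
  have s: "\<xi> (Suc n) \<omega> \<in> space \<mu>" if "\<omega> \<in> space P" for n \<omega> using measurable_space[OF \<xi>_meas that] .
  have X_meas: "\<And>n. ?X n \<in> borel_measurable P"
    using H sep rmvf lam_pos \<xi>_meas by (rule prox_iter_measurable)
  have D_nonneg: "0 \<le> D n \<omega>" for n \<omega> by (simp add: D_def)
  have "integrable P (D n) \<and> (\<integral>\<omega>. D n \<omega> \<partial>P) \<le> (\<integral>\<omega>. D 0 \<omega> \<partial>P) + K * (\<Sum>k<n. (lam k)\<^sup>2)"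
  proof (rule integral_recursive_bound[OF _ _ _ _ D_nonneg])
    show "D n \<in> borel_measurable P" for n
      unfolding D_def[abs_def] by (intro borel_measurable_continuous_on[OF _ X_meas] continuous_intros)
    show "H n \<in> borel_measurable P" for n
      unfolding H_def[abs_def] by (rule tLp_tinner_tlog_compose_measurable[OF H sep \<phi>_tLp \<xi>_meas X_meas])
    show "integrable P (N n)" "(\<integral>\<omega>. N n \<omega> \<partial>P) = K" for n
      using tLp2_norm_sq(1)[OF \<phi>_tLp]
        integrable_distr_eq[OF \<xi>_meas borel_measurable_integrable[OF tLp2_norm_sq(1)[OF \<phi>_tLp]]]
        integral_distr[OF \<xi>_meas borel_measurable_integrable[OF tLp2_norm_sq(1)[OF \<phi>_tLp]]]
      unfolding N_def[abs_def] K_def \<xi>_distr by simp_all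
    show "0 \<le> N n \<omega>" for n \<omega> by (simp add: N_def)
    show "D (Suc n) \<omega> \<le> D n \<omega> - 2 * lam n * H n \<omega> + (lam n)\<^sup>2 * N n \<omega>" if "\<omega> \<in> space P" for n \<omega>
      unfolding D_def H_def N_def
      by (rule prox_iter_dist_sq_step[where lam = lam and \<xi> = \<xi> and n = n, OF H rmvf lam_pos s[OF that] \<phi>_sel])
    show "\<bar>H n \<omega>\<bar> \<le> (N n \<omega> + D n \<omega>) / 2" if "\<omega> \<in> space P" for n \<omega>
      unfolding D_def H_def N_def by (rule abs_tinner_tlog_le[OF \<phi>_tan[OF s[OF that]]])
    show "(\<integral>\<omega>. H n \<omega> \<partial>P) = 0" if "integrable P (H n)" for n
      by (rule P.integral_eq_0_if_real_cond_exp_AE_0[OF natural_filtration_subalgebra[where \<xi> = \<xi>, OF \<xi>_meas] that])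
        (use centered[of n] in \<open>simp add: H_def[abs_def]\<close>)
    show "integrable P (D 0)" unfolding D_def[abs_def] by simp
  qed
  then show ?thesis unfolding D_def[abs_def] K_def by (simp add: P.prob_space)
qed

theorem mainTheorem6:
  fixes \<mu> :: "'e measure" and P :: "'w measure"
    and A :: "'e \<Rightarrow> 'a::complete_space \<Rightarrow> 'a tvec set"
    and lam :: "nat \<Rightarrow> real" and \<xi> :: "nat \<Rightarrow> 'w \<Rightarrow> 'e" and x0 :: 'a
    and \<alpha> :: "'e \<Rightarrow> real" and xstar :: 'a and \<phi>star :: "'e \<Rightarrow> 'a tvec"
  assumes hadamard: "hadamard_space TYPE('a)"
    and sep: "separable_space TYPE('a)"
    and tsep: "\<And>x::'a. tangent_separable x"
    and probE: "prob_space \<mu>" and probO: "prob_space P"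
    and rmvf: "random_monotone_vf \<mu> A"
    \<comment> \<open>(A0)\<close>
    and lam_pos: "\<And>n. lam n > 0"
    and lam_sq: "summable (\<lambda>n. (lam n)\<^sup>2)"
    and lam_div: "\<not> summable lam"
    and xi_meas: "\<And>n. \<xi> (Suc n) \<in> measurable P \<mu>"
    and xi_indep: "prob_space.indep_vars P (\<lambda>_. \<mu>) (\<lambda>n. \<xi> (Suc n)) UNIV"
    and xi_distr: "\<And>n. distr P \<mu> (\<xi> (Suc n)) = \<mu>"
    \<comment> \<open>(A1)\<close>
    and alpha_meas: "\<alpha> \<in> borel_measurable \<mu>"
    and alpha_range: "\<And>s. s \<in> space \<mu> \<Longrightarrow> 0 < \<alpha> s \<and> \<alpha> s \<le> 1"
    and alpha_int: "(\<integral>s. \<alpha> s \<partial>\<mu>) > 0"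
    and strong: "\<And>s. s \<in> space \<mu> \<Longrightarrow> vf_strongly_monotone (A s) (\<alpha> s)"
    \<comment> \<open>(A2)\<close>
    and phi_sel: "\<phi>star \<in> selections 2 \<mu> A xstar"
    and phi_int: "tbarycenter \<mu> xstar \<phi>star (tzero xstar)"
    \<comment> \<open>(A3)\<close>
    and A3: "\<And>n. AE \<omega> in P. real_cond_exp P (natural_filtration P \<mu> \<xi> n)
               (\<lambda>\<omega>. tinner xstar (\<phi>star (\<xi> (Suc n) \<omega>))
                        (tlog xstar (prox_iter A lam \<xi> x0 n \<omega>))) \<omega> = 0"
  shows "(\<integral>\<^sup>+ \<omega>. ennreal ((dist (prox_iter A lam \<xi> x0 n \<omega>) xstar)\<^sup>2) \<partial>P)
           \<le> (\<integral>\<^sup>+ \<omega>. ennreal ((dist (prox_iter A lam \<xi> x0 0 \<omega>) xstar)\<^sup>2) \<partial>P)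
              + (\<integral>\<^sup>+ s. ennreal ((tnorm (\<phi>star s))\<^sup>2) \<partial>\<mu>) * (\<Sum>k. ennreal ((lam k)\<^sup>2))
       \<and> (\<integral>\<^sup>+ \<omega>. ennreal ((dist (prox_iter A lam \<xi> x0 0 \<omega>) xstar)\<^sup>2) \<partial>P)
              + (\<integral>\<^sup>+ s. ennreal ((tnorm (\<phi>star s))\<^sup>2) \<partial>\<mu>) * (\<Sum>k. ennreal ((lam k)\<^sup>2)) < \<infinity>"
proof -
  interpret P: prob_space P by (rule probO)
  let ?D = "\<lambda>n \<omega>. (dist (prox_iter A lam \<xi> x0 n \<omega>) xstar)\<^sup>2"
  let ?K = "\<integral>s. (tnorm (\<phi>star s))\<^sup>2 \<partial>\<mu>"
  have bound: "integrable P (?D n) \<and> (\<integral>\<omega>. ?D n \<omega> \<partial>P) \<le> (\<integral>\<omega>. ?D 0 \<omega> \<partial>P) + ?K * (\<Sum>k<n. (lam k)\<^sup>2)" for n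
    using prox_iter_integral_dist_sq_le[where lam = lam and \<xi> = \<xi>,
        OF hadamard sep probO rmvf lam_pos xi_meas xi_distr phi_sel A3] by (simp add: P.prob_space)
  have "tLp 2 \<mu> xstar \<phi>star" using phi_sel unfolding selections_def by blast
  then have K: "(\<integral>\<^sup>+ s. ennreal ((tnorm (\<phi>star s))\<^sup>2) \<partial>\<mu>) = ennreal ?K" by (rule tLp2_norm_sq(2))
  have "0 \<le> ?K" by (simp add: integral_nonneg_AE)
  have D_nonneg: "\<And>n \<omega>. 0 \<le> ?D n \<omega>" by simp
  show ?thesis
    unfolding K using nn_integral_bound_of_integral_bound[where D = ?D and M = P and l = lam,
      OF conjunct1[OF bound] D_nonneg \<open>0 \<le> ?K\<close> lam_sq conjunct2[OF bound]] by simp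
qed

end
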